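(* Let $X$ be a real random variable with $\mathbb{E}X^2<\infty$, $\mu=\mathbb{E}X$, $\sigma^2=\operatorname{Var}(X)$, let $(X_{i,k})_{1\le i\le k}$ be a triangular array of i.i.d. random variables distributed as $X$, and $S_{k,k}=\sum_{i=1}^kX_{i,k}$. Then, as $n\to\infty$, \[ \sum_{k=1}^n\left[\left(\frac{S_{k,k}-k\mu}{k}\right)^2-\frac{\mathbb{E}\big[|X-\mu|^2\mathbf{1}_{\{|X-\mu|\le\sigma k\}}\big]}{k}\right]=O_{\mathbb{P}}(1) \quad\text{and}\quad \sum_{k=1}^n\left|\frac{S_{k,k}-k\mu}{k}\right|^3=O_{\mathbb{P}}(1). \]
   Context: For a sequence of random variables $(Z_n)$, $Z_n=O_{\mathbb{P}}(1)$ means the sequence is bounded in probability (tight): for every $\varepsilon>0$ there is $M$ with $\sup_n\mathbb{P}(|Z_n|>M)<\varepsilon$. *)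

theory Defs
  imports "HOL-Probability.Probability"
begin

definition bounded_in_prob :: "'a measure \<Rightarrow> (nat \<Rightarrow> 'a \<Rightarrow> real) \<Rightarrow> bool" where
  "bounded_in_prob M Z \<longleftrightarrow>
     (\<forall>e>0. \<exists>B. (SUP n. measure M {\<omega> \<in> space M. \<bar>Z n \<omega>\<bar> > B}) < e)"

end

theory Submission
  imports Defs
begin

(* Write Y = X - mu and let S_k = (sum_i X_{i,k} - k mu)/k be the k-th row mean
   (row_mean).  Truncate each entry of row k at level sigma*k, i.e. replace y by
   trunc sigma k y = (if |y| <= sigma*k then y else 0), and let St_k (trunc_row_mean) be the
   row mean of the truncated entries.
   (1) S_k differs from St_k only if some |Y_{i,k}| > sigma*k, which has probability at most
       k * P(|Y| > sigma*k); these numbers are summable because E Y^2 < oo.  Changing the terms of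
       a series on events of summable probability preserves tightness, so it suffices to treat
       St_k.
   (2) The truncated rows are bounded, so moment inequalities for sums of independent, bounded,
       centred variables apply: with Rosenthal-type bounds for the 3rd and 4th moments one gets
       sum_k E|St_k|^3 < oo and sum_k E (St_k^2 - E St_k^2)^2 < oo, while
       |E St_k^2 - E[Y^2; |Y| <= sigma*k]/k| <= sigma^2/k^2.  Independence of the rows makes the
       centred squares orthogonal, so both sums in the theorem have uniformly bounded L1 norm and
       are tight by Markov's inequality. *)

subsection \<open>Criteria for boundedness in probability\<close>

text \<open>The probabilities in the definition of boundedness in probability lie in [0,1], so the
  supremum there is a genuine supremum.\<close>
lemma tail_probs_bdd_above:
  assumes "prob_space M"
  shows "bdd_above (range (\<lambda>n. measure M {\<omega> \<in> space M. \<bar>Z n \<omega>\<bar> > B}))"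
proof -
  interpret prob_space M by fact
  show ?thesis by (intro bdd_aboveI[of _ 1]) auto
qed

lemma bounded_in_probI:
  assumes "prob_space M"
    and "\<And>e. e > 0 \<Longrightarrow> \<exists>B c. c < e \<and> (\<forall>n. measure M {\<omega> \<in> space M. \<bar>Z n \<omega>\<bar> > B} \<le> c)"
  shows "bounded_in_prob M Z"
  unfolding bounded_in_prob_def
proof (intro allI impI)
  fix e :: real assume "e > 0"
  then obtain B c where "c < e" "\<forall>n. measure M {\<omega> \<in> space M. \<bar>Z n \<omega>\<bar> > B} \<le> c"
    using assms(2) by blast
  then have "(SUP n. measure M {\<omega> \<in> space M. \<bar>Z n \<omega>\<bar> > B}) \<le> c"
    by (intro cSUP_least) auto
  with \<open>c < e\<close> show "\<exists>B. (SUP n. measure M {\<omega> \<in> space M. \<bar>Z n \<omega>\<bar> > B}) < e"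
    by (intro exI[of _ B]) simp
qed

lemma bounded_in_probE:
  assumes "prob_space M" "bounded_in_prob M Z" "e > 0"
  obtains B where "\<And>n. measure M {\<omega> \<in> space M. \<bar>Z n \<omega>\<bar> > B} < e"
proof -
  obtain B where B: "(SUP n. measure M {\<omega> \<in> space M. \<bar>Z n \<omega>\<bar> > B}) < e"
    using assms unfolding bounded_in_prob_def by blast
  have "measure M {\<omega> \<in> space M. \<bar>Z n \<omega>\<bar> > B} < e" for n
    using cSUP_upper[OF UNIV_I tail_probs_bdd_above[OF assms(1)]] B by (rule order.strict_trans1)
  then show ?thesis using that by blast
qed

text \<open>Tightness is preserved under sums: |Z1 + Z2| > B1 + B2 forces |Z1| > B1 or |Z2| > B2.\<close>
lemma bounded_in_prob_add:
  assumes P: "prob_space M" and Z1: "bounded_in_prob M Z1" and Z2: "bounded_in_prob M Z2"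
    and m1: "\<And>n. Z1 n \<in> borel_measurable M" and m2: "\<And>n. Z2 n \<in> borel_measurable M"
    and eq: "\<And>n \<omega>. \<omega> \<in> space M \<Longrightarrow> Z n \<omega> = Z1 n \<omega> + Z2 n \<omega>"
  shows "bounded_in_prob M Z"
proof (rule bounded_in_probI[OF P])
  interpret prob_space M by fact
  fix e :: real assume "e > 0"
  then have e3: "e/3 > 0" by simp
  obtain B1 where B1: "\<And>n. measure M {\<omega> \<in> space M. \<bar>Z1 n \<omega>\<bar> > B1} < e/3"
    using bounded_in_probE[OF P Z1 e3] by blast
  obtain B2 where B2: "\<And>n. measure M {\<omega> \<in> space M. \<bar>Z2 n \<omega>\<bar> > B2} < e/3"
    using bounded_in_probE[OF P Z2 e3] by blast
  have "measure M {\<omega> \<in> space M. \<bar>Z n \<omega>\<bar> > B1 + B2} \<le> 2*e/3" for n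
  proof -
    have "measure M {\<omega> \<in> space M. \<bar>Z n \<omega>\<bar> > B1 + B2}
        \<le> measure M ({\<omega> \<in> space M. \<bar>Z1 n \<omega>\<bar> > B1} \<union> {\<omega> \<in> space M. \<bar>Z2 n \<omega>\<bar> > B2})"
      using m1[of n] m2[of n] eq by (intro finite_measure_mono) auto
    also have "\<dots> \<le> measure M {\<omega> \<in> space M. \<bar>Z1 n \<omega>\<bar> > B1}
                    + measure M {\<omega> \<in> space M. \<bar>Z2 n \<omega>\<bar> > B2}"
      using m1[of n] m2[of n] by (intro measure_Un_le) auto
    also have "\<dots> \<le> 2*e/3" using B1[of n] B2[of n] by simp
    finally show ?thesis .
  qed
  then show "\<exists>B c. c < e \<and> (\<forall>n. measure M {\<omega> \<in> space M. \<bar>Z n \<omega>\<bar> > B} \<le> c)"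
    using \<open>e > 0\<close> by (intro exI[of _ "B1+B2"] exI[of _ "2*e/3"]) auto
qed

text \<open>A sequence with uniformly bounded first absolute moments is tight (Markov's inequality).\<close>
lemma bounded_in_prob_L1:
  assumes P: "prob_space M" and int: "\<And>n. integrable M (Z n)"
    and bnd: "\<And>n. (\<integral>\<omega>. \<bar>Z n \<omega>\<bar> \<partial>M) \<le> C"
  shows "bounded_in_prob M Z"
proof (rule bounded_in_probI[OF P])
  interpret prob_space M by fact
  fix e :: real assume "e > 0"
  define B where "B = 2 * (\<bar>C\<bar> + 1) / e"
  have Bpos: "B > 0" using \<open>e > 0\<close> by (simp add: B_def)
  have "measure M {\<omega> \<in> space M. \<bar>Z n \<omega>\<bar> > B} \<le> (\<bar>C\<bar> + 1) / B" for n
  proof -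
    have "measure M {\<omega> \<in> space M. \<bar>Z n \<omega>\<bar> > B} \<le> measure M {\<omega> \<in> space M. \<bar>Z n \<omega>\<bar> \<ge> B}"
      using int[of n] by (intro finite_measure_mono) auto
    also have "\<dots> \<le> (\<integral>\<omega>. \<bar>Z n \<omega>\<bar> \<partial>M) / B"
      using int[of n] Bpos by (intro integral_Markov_inequality_measure[where A="space M"]) auto
    also have "\<dots> \<le> (\<bar>C\<bar> + 1) / B"
      using bnd[of n] Bpos by (intro divide_right_mono) auto
    finally show ?thesis .
  qed
  moreover have "(\<bar>C\<bar> + 1) / B < e"
    using \<open>e > 0\<close> by (simp add: B_def field_simps) (simp add: add_pos_nonneg)
  ultimately show "\<exists>B c. c < e \<and> (\<forall>n. measure M {\<omega> \<in> space M. \<bar>Z n \<omega>\<bar> > B} \<le> c)"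
    by blast
qed

text \<open>A single real random variable is tight: P(W > n) tends to 0 by continuity from above.\<close>
lemma tail_prob_small:
  fixes W :: "'a \<Rightarrow> real"
  assumes P: "prob_space M" and W: "W \<in> borel_measurable M" and "e > 0"
  shows "\<exists>B. measure M {\<omega> \<in> space M. W \<omega> > B} < e"
proof -
  interpret prob_space M by fact
  have "(\<lambda>n. measure M {\<omega> \<in> space M. W \<omega> > real n})
          \<longlonglongrightarrow> measure M (\<Inter>n. {\<omega> \<in> space M. W \<omega> > real n})"
    using W by (intro finite_Lim_measure_decseq) (auto simp: decseq_def)
  moreover have "(\<Inter>n. {\<omega> \<in> space M. W \<omega> > real n}) = {}"
  proof -
    have "\<not> (\<forall>n. W \<omega> > real n)" for \<omega>
      using reals_Archimedean2[of "W \<omega>"] by (auto simp: not_less dest: less_imp_le)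
    then show ?thesis by auto
  qed
  ultimately have "(\<lambda>n. measure M {\<omega> \<in> space M. W \<omega> > real n}) \<longlonglongrightarrow> 0" by simp
  then obtain N where "\<forall>n\<ge>N. measure M {\<omega> \<in> space M. W \<omega> > real n} < e"
    using \<open>e > 0\<close> by (auto simp: lim_sequentially dist_real_def)
  then show ?thesis by blast
qed

lemma abs_partial_sum_le_initial:
  fixes D :: "nat \<Rightarrow> real"
  assumes "\<And>k. k \<ge> K \<Longrightarrow> D k = 0"
  shows "\<bar>\<Sum>k=1..n. D k\<bar> \<le> (\<Sum>k<K. \<bar>D k\<bar>)"
proof -
  have "\<bar>\<Sum>k=1..n. D k\<bar> \<le> (\<Sum>k=1..n. \<bar>D k\<bar>)" by (rule sum_abs)
  also have "\<dots> = (\<Sum>k\<in>{1..n}. if k \<in> {..<K} then \<bar>D k\<bar> else 0)"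
    using assms by (intro sum.cong) (auto simp: not_less)
  also have "\<dots> = (\<Sum>k\<in>{1..n} \<inter> {..<K}. \<bar>D k\<bar>)"
    by (simp add: sum.inter_restrict)
  also have "\<dots> \<le> (\<Sum>k<K. \<bar>D k\<bar>)"
    by (intro sum_mono2) auto
  finally show ?thesis .
qed

text \<open>With high probability only the first K terms
  are nonzero, and their sum is a single random variable.\<close>
lemma bounded_in_prob_rarely_nonzero:
  fixes D :: "nat \<Rightarrow> 'a \<Rightarrow> real"
  assumes P: "prob_space M" and m: "\<And>k. D k \<in> borel_measurable M"
    and s: "summable (\<lambda>k. measure M {\<omega> \<in> space M. D k \<omega> \<noteq> 0})"
  shows "bounded_in_prob M (\<lambda>n \<omega>. \<Sum>k=1..n. D k \<omega>)"
proof (rule bounded_in_probI[OF P])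
  interpret prob_space M by fact
  fix e :: real assume "e > 0"
  define A where "A i = {\<omega> \<in> space M. D i \<omega> \<noteq> 0}" for i
  obtain K where K: "norm (\<Sum>i. prob (A (i + K))) < e/3"
    using suminf_exist_split[of "e/3" "\<lambda>i. prob (A i)"] s \<open>e > 0\<close> unfolding A_def by auto
  have As: "range (\<lambda>i. A (i + K)) \<subseteq> sets M" using m unfolding A_def by auto
  have "prob (\<Union>i. A (i + K)) \<le> (\<Sum>i. prob (A (i + K)))"
    using summable_ignore_initial_segment[OF s, of K] As unfolding A_def
    by (intro finite_measure_subadditive_countably) auto
  also have "\<dots> < e/3" using K by simp
  finally have UA: "prob (\<Union>i. A (i + K)) < e/3" .
  define W where "W \<omega> = (\<Sum>k<K. \<bar>D k \<omega>\<bar>)" for \<omega>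
  have Wm: "W \<in> borel_measurable M" unfolding W_def using m by measurable
  obtain B where B: "prob {\<omega> \<in> space M. W \<omega> > B} < e/3"
    using tail_prob_small[OF P Wm, of "e/3"] \<open>e > 0\<close> by auto
  have "prob {\<omega> \<in> space M. \<bar>\<Sum>k=1..n. D k \<omega>\<bar> > B} \<le> 2*e/3" for n
  proof -
    have "{\<omega> \<in> space M. \<bar>\<Sum>k=1..n. D k \<omega>\<bar> > B} \<subseteq> {\<omega> \<in> space M. W \<omega> > B} \<union> (\<Union>i. A (i + K))"
    proof safe
      fix \<omega> assume \<omega>: "\<omega> \<in> space M" "\<bar>\<Sum>k=1..n. D k \<omega>\<bar> > B" "\<omega> \<notin> (\<Union>i. A (i + K))"
      have "D k \<omega> = 0" if "k \<ge> K" for k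
        using \<omega>(1,3) that unfolding A_def by (auto dest!: spec[of _ "k - K"])
      then have "\<bar>\<Sum>k=1..n. D k \<omega>\<bar> \<le> W \<omega>"
        unfolding W_def by (rule abs_partial_sum_le_initial)
      then show "B < W \<omega>" using \<omega>(2) by simp
    qed
    then have "prob {\<omega> \<in> space M. \<bar>\<Sum>k=1..n. D k \<omega>\<bar> > B}
        \<le> prob ({\<omega> \<in> space M. W \<omega> > B} \<union> (\<Union>i. A (i + K)))"
      using As Wm by (intro finite_measure_mono) auto
    also have "\<dots> \<le> prob {\<omega> \<in> space M. W \<omega> > B} + prob (\<Union>i. A (i + K))"
      using As Wm by (intro measure_Un_le) auto
    also have "\<dots> \<le> 2*e/3" using B UA by simp
    finally show ?thesis .
  qed
  then show "\<exists>B c. c < e \<and> (\<forall>n. prob {\<omega> \<in> space M. \<bar>\<Sum>k=1..n. D k \<omega>\<bar> > B} \<le> c)"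
    using \<open>e > 0\<close> by (intro exI[of _ B] exI[of _ "2*e/3"]) auto
qed

lemma bounded_in_prob_sum_perturb:
  fixes G H :: "nat \<Rightarrow> 'a \<Rightarrow> real"
  assumes P: "prob_space M"
    and G: "\<And>k. G k \<in> borel_measurable M" and H: "\<And>k. H k \<in> borel_measurable M"
    and A: "\<And>k. A k \<in> sets M" "summable (\<lambda>k. measure M (A k))"
    and agree: "\<And>k \<omega>. \<omega> \<in> space M \<Longrightarrow> \<omega> \<notin> A k \<Longrightarrow> G k \<omega> = H k \<omega>"
    and tight: "bounded_in_prob M (\<lambda>n \<omega>. \<Sum>k=1..n. H k \<omega>)"
  shows "bounded_in_prob M (\<lambda>n \<omega>. \<Sum>k=1..n. G k \<omega>)"
proof (rule bounded_in_prob_add[OF P _ tight])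
  interpret prob_space M by fact
  have le: "prob {\<omega> \<in> space M. G k \<omega> - H k \<omega> \<noteq> 0} \<le> prob (A k)" for k
    using agree A G H by (intro finite_measure_mono) auto
  have "summable (\<lambda>k. prob {\<omega> \<in> space M. G k \<omega> - H k \<omega> \<noteq> 0})"
    by (rule summable_comparison_test'[OF A(2)]) (use le in simp)
  then show "bounded_in_prob M (\<lambda>n \<omega>. \<Sum>k=1..n. G k \<omega> - H k \<omega>)"
    using G H by (intro bounded_in_prob_rarely_nonzero[OF P]) auto
  show "(\<lambda>\<omega>. \<Sum>k=1..n. G k \<omega> - H k \<omega>) \<in> borel_measurable M"
    and "(\<lambda>\<omega>. \<Sum>k=1..n. H k \<omega>) \<in> borel_measurable M" for n
    using G H by auto
qed (simp add: sum.distrib[symmetric])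

text \<open>The truncated variables below are bounded, which makes all their moments finite; this
  predicate records boundedness and is closed under the usual operations.\<close>
definition bounded_on :: "'a set \<Rightarrow> ('a \<Rightarrow> real) \<Rightarrow> bool" where
  "bounded_on S f \<longleftrightarrow> (\<exists>c. \<forall>x\<in>S. \<bar>f x\<bar> \<le> c)"

lemma bounded_onI: "(\<And>x. x \<in> S \<Longrightarrow> \<bar>f x\<bar> \<le> c) \<Longrightarrow> bounded_on S f"
  unfolding bounded_on_def by blast

lemma bounded_on_const [simp]: "bounded_on S (\<lambda>x. c)"
  by (rule bounded_onI[of _ _ "\<bar>c\<bar>"]) auto

lemma bounded_on_add: "bounded_on S f \<Longrightarrow> bounded_on S g \<Longrightarrow> bounded_on S (\<lambda>x. f x + g x)"
proof -
  assume "bounded_on S f" "bounded_on S g"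
  then obtain a b where "\<forall>x\<in>S. \<bar>f x\<bar> \<le> a" "\<forall>x\<in>S. \<bar>g x\<bar> \<le> b"
    unfolding bounded_on_def by blast
  then show ?thesis by (intro bounded_onI[of _ _ "a + b"]) (smt (verit))
qed

lemma bounded_on_mult: "bounded_on S f \<Longrightarrow> bounded_on S g \<Longrightarrow> bounded_on S (\<lambda>x. f x * g x)"
proof -
  assume "bounded_on S f" "bounded_on S g"
  then obtain a b where "\<forall>x\<in>S. \<bar>f x\<bar> \<le> a" "\<forall>x\<in>S. \<bar>g x\<bar> \<le> b"
    unfolding bounded_on_def by blast
  then show ?thesis
    by (intro bounded_onI[of _ _ "a * b"]) (auto simp: abs_mult intro!: mult_mono)
qed

lemma bounded_on_diff: "bounded_on S f \<Longrightarrow> bounded_on S g \<Longrightarrow> bounded_on S (\<lambda>x. f x - g x)"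
  using bounded_on_add[of S f "\<lambda>x. - g x"] unfolding bounded_on_def by auto

lemma bounded_on_abs: "bounded_on S f \<Longrightarrow> bounded_on S (\<lambda>x. \<bar>f x\<bar>)"
  unfolding bounded_on_def by auto

lemma bounded_on_power: "bounded_on S f \<Longrightarrow> bounded_on S (\<lambda>x. f x ^ n)"
  by (induction n) (auto intro: bounded_on_mult)

lemma bounded_on_divide: "bounded_on S f \<Longrightarrow> bounded_on S (\<lambda>x. f x / c)"
  using bounded_on_mult[of S f "\<lambda>x. 1/c"] by simp

lemma bounded_on_sum:
  "(\<And>i. i \<in> I \<Longrightarrow> bounded_on S (f i)) \<Longrightarrow> bounded_on S (\<lambda>x. \<Sum>i\<in>I. f i x)"
  by (induction I rule: infinite_finite_induct) (auto intro: bounded_on_add)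

lemma (in prob_space) integrable_bounded_on:
  "f \<in> borel_measurable M \<Longrightarrow> bounded_on (space M) f \<Longrightarrow> integrable M f"
proof -
  assume f: "f \<in> borel_measurable M" and "bounded_on (space M) f"
  then obtain c where "\<forall>x\<in>space M. \<bar>f x\<bar> \<le> c" unfolding bounded_on_def by blast
  then show ?thesis by (intro integrable_const_bound[where B=c] f) auto
qed

text \<open>A one-step expansion of |a + b|^3 which keeps the cross term a|a| b exactly; after taking
  expectations with b centred and independent of a this term vanishes.\<close>
lemma abs_add_cube_le_nonneg:
  fixes a b :: real
  assumes "a \<ge> 0"
  shows "\<bar>a + b\<bar>^3 \<le> \<bar>a\<bar>^3 + 3*(a*\<bar>a\<bar>)*b + 3*\<bar>a\<bar>*b^2 + 3*\<bar>b\<bar>^3"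
proof (cases "a + b \<ge> 0")
  case True
  have "\<bar>a + b\<bar>^3 = a^3 + 3*a^2*b + 3*a*b^2 + b^3"
    using True by (simp add: power3_eq_cube power2_eq_square algebra_simps)
  moreover have "b^3 \<le> 3*\<bar>b\<bar>^3"
  proof -
    have "b^3 \<le> \<bar>b\<bar>^3" using abs_ge_self[of "b^3"] by (simp add: power_abs)
    moreover have "0 \<le> \<bar>b\<bar>^3" by simp
    ultimately show ?thesis by linarith
  qed
  ultimately show ?thesis using \<open>a \<ge> 0\<close> by (simp add: power2_eq_square power3_eq_cube)
next
  case False
  have "a^2 + 3*a*b + 3*b^2 = (a + 3*b/2)^2 + 3*b^2/4" by (simp add: power2_eq_square algebra_simps)
  then have "0 \<le> a * (a^2 + 3*a*b + 3*b^2)" using assms by simp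
  then have lower: "0 \<le> a^3 + 3*a^2*b + 3*a*b^2"
    by (simp add: power2_eq_square power3_eq_cube algebra_simps)
  have "\<bar>a + b\<bar> \<le> \<bar>b\<bar>" using False assms by simp
  then have "\<bar>a + b\<bar>^3 \<le> \<bar>b\<bar>^3" by (intro power_mono) auto
  moreover have "\<bar>a\<bar>^3 + 3*(a*\<bar>a\<bar>)*b + 3*\<bar>a\<bar>*b^2 = a^3 + 3*a^2*b + 3*a*b^2"
    using assms by (simp add: power2_eq_square)
  moreover have "0 \<le> \<bar>b\<bar>^3" by simp
  ultimately show ?thesis using lower by linarith
qed

text \<open>The general case follows by symmetry (a, b) -> (-a, -b).\<close>
lemma abs_add_cube_le:
  fixes a b :: real
  shows "\<bar>a + b\<bar>^3 \<le> \<bar>a\<bar>^3 + 3*(a*\<bar>a\<bar>)*b + 3*\<bar>a\<bar>*b^2 + 3*\<bar>b\<bar>^3"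
proof (cases "a \<ge> 0")
  case True then show ?thesis by (rule abs_add_cube_le_nonneg)
next
  case False
  then have "\<bar>-a + -b\<bar>^3 \<le> \<bar>-a\<bar>^3 + 3*((-a)*\<bar>-a\<bar>)*(-b) + 3*\<bar>-a\<bar>*(-b)^2 + 3*\<bar>-b\<bar>^3"
    by (intro abs_add_cube_le_nonneg) auto
  moreover have "\<bar>-a + -b\<bar> = \<bar>a + b\<bar>" by (simp add: abs_minus_commute)
  ultimately show ?thesis by simp
qed

lemma abs_add_cube_le_4:
  fixes a b :: real
  shows "\<bar>a + b\<bar>^3 \<le> 4 * (\<bar>a\<bar>^3 + \<bar>b\<bar>^3)"
proof -
  have "\<bar>a + b\<bar>^3 \<le> (\<bar>a\<bar> + \<bar>b\<bar>)^3" by (intro power_mono abs_triangle_ineq) auto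
  also have "4 * (\<bar>a\<bar>^3 + \<bar>b\<bar>^3) - (\<bar>a\<bar> + \<bar>b\<bar>)^3 = 3 * (\<bar>a\<bar> + \<bar>b\<bar>) * (\<bar>a\<bar> - \<bar>b\<bar>)\<^sup>2"
    by (simp add: power2_eq_square power3_eq_cube algebra_simps)
  then have "(\<bar>a\<bar> + \<bar>b\<bar>)^3 \<le> 4 * (\<bar>a\<bar>^3 + \<bar>b\<bar>^3)"
    by (smt (verit) abs_ge_zero mult_nonneg_nonneg zero_le_power2)
  finally show ?thesis .
qed

lemma add_pow4_le_8:
  fixes a b :: real
  shows "(a + b)^4 \<le> 8 * (a^4 + b^4)"
proof -
  have "8 * (a^4 + b^4) - (a + b)^4 = (a - b)\<^sup>2 * (7 * a\<^sup>2 + 10 * a * b + 7 * b\<^sup>2)"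
    by (simp add: power2_eq_square power4_eq_xxxx algebra_simps)
  moreover have "7 * a\<^sup>2 + 10 * a * b + 7 * b\<^sup>2 = 5 * (a + b)\<^sup>2 + 2 * a\<^sup>2 + 2 * b\<^sup>2"
    by (simp add: power2_eq_square algebra_simps)
  ultimately show ?thesis by (smt (verit) mult_nonneg_nonneg zero_le_power2)
qed

lemma abs_le_half_square_plus_half: "\<bar>x::real\<bar> \<le> x\<^sup>2 / 2 + 1 / 2"
proof -
  have "0 \<le> (\<bar>x\<bar> - 1)\<^sup>2" by simp
  then show ?thesis by (simp add: power2_eq_square algebra_simps)
qed

text \<open>Tail of the series of inverse squares, by telescoping 1/k^2 \<le> 2/k - 2/(k+1).\<close>
lemma sum_inverse_squares_shift_le:
  assumes "m \<ge> (1::nat)"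
  shows "(\<Sum>k\<in>{m..<m+n}. 1 / (real k)\<^sup>2) \<le> 2 / m - 2 / (m + n)"
proof (induction n)
  case (Suc n)
  define x where "x = real (m + n)"
  have x: "x \<ge> 1" using assms by (simp add: x_def)
  have "x * (x + 1) \<le> 2 * x\<^sup>2" using x by (simp add: power2_eq_square algebra_simps)
  then have "2 / (2 * x\<^sup>2) \<le> 2 / (x * (x + 1))" using x by (intro divide_left_mono) auto
  also have "2 / (x * (x + 1)) = 2 / x - 2 / (x + 1)" using x by (simp add: field_simps)
  finally have "1 / x\<^sup>2 \<le> 2 / x - 2 / (x + 1)" by simp
  then show ?case using Suc by (simp add: x_def algebra_simps)
qed simp

lemma sum_inverse_squares_tail_le:
  assumes "m \<ge> (1::nat)"
  shows "(\<Sum>k\<in>{m..N}. 1 / (real k)\<^sup>2) \<le> 2 / m"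
proof (cases "m \<le> N")
  case True
  then have "{m..N} = {m..<m + (N + 1 - m)}" by auto
  then have "(\<Sum>k\<in>{m..N}. 1 / (real k)\<^sup>2) \<le> 2 / m - 2 / (m + (N + 1 - m))"
    using sum_inverse_squares_shift_le[OF assms, of "N + 1 - m"] by simp
  also have "\<dots> \<le> 2 / m" by simp
  finally show ?thesis .
qed simp

text \<open>Pointwise counting bounds behind the summability facts: for |y| > 0,
  sum of k over k < |y|/sigma is at most y^2/sigma^2, and sum of |y|^3/k^2 over
  k \<ge> |y|/sigma is at most 2 sigma y^2.\<close>
lemma sum_indices_below_le_square:
  fixes t :: real
  assumes "t \<ge> 0"
  shows "(\<Sum>k\<le>N. if real k < t then real k else 0) \<le> t\<^sup>2"
proof -
  define F where "F = {1..nat \<lfloor>t\<rfloor>}"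
  have "(\<Sum>k\<le>N. if real k < t then real k else 0) \<le> (\<Sum>k\<le>N. if k \<in> F then t else 0)"
  proof (intro sum_mono)
    fix k
    show "(if real k < t then real k else 0) \<le> (if k \<in> F then t else 0)"
    proof (cases "real k < t \<and> k \<ge> 1")
      case True
      then have "int k \<le> \<lfloor>t\<rfloor>" by (simp add: le_floor_iff)
      then show ?thesis using True unfolding F_def by auto
    qed (use assms in auto)
  qed
  also have "\<dots> = t * card ({..N} \<inter> F)"
    using sum.inter_restrict[of "{..N}" "\<lambda>_. t" F] by (simp add: mult.commute)
  also have "\<dots> \<le> t * card F"
  proof -
    have "card ({..N} \<inter> F) \<le> card F" by (intro card_mono) (auto simp: F_def)
    then show ?thesis using assms by (intro mult_left_mono) auto
  qed
  also have "card F = nat \<lfloor>t\<rfloor>" by (simp add: F_def)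
  also have "t * real (nat \<lfloor>t\<rfloor>) \<le> t * t" using assms by (intro mult_left_mono) auto
  finally show ?thesis by (simp add: power2_eq_square)
qed

lemma sum_indices_exceeded_le:
  fixes y \<sigma> :: real
  assumes "\<sigma> > 0"
  shows "(\<Sum>k\<le>N. if \<sigma> * real k < \<bar>y\<bar> then real k else 0) \<le> y\<^sup>2 / \<sigma>\<^sup>2"
proof -
  have "(\<Sum>k\<le>N. if \<sigma> * real k < \<bar>y\<bar> then real k else 0)
      = (\<Sum>k\<le>N. if real k < \<bar>y\<bar>/\<sigma> then real k else 0)"
    using assms by (intro sum.cong) (auto simp: field_simps)
  also have "\<dots> \<le> (\<bar>y\<bar>/\<sigma>)\<^sup>2" using assms by (intro sum_indices_below_le_square) auto
  finally show ?thesis by (simp add: power_divide)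
qed

lemma sum_truncated_cubes_le:
  fixes y \<sigma> :: real
  assumes "\<sigma> > 0"
  shows "(\<Sum>k\<le>N. (if \<bar>y\<bar> \<le> \<sigma> * real k then \<bar>y\<bar>^3 else 0) / (real k)\<^sup>2) \<le> 2 * \<sigma> * y\<^sup>2"
proof (cases "y = 0")
  case False
  define m where "m = nat \<lceil>\<bar>y\<bar>/\<sigma>\<rceil>"
  have "0 < \<bar>y\<bar>/\<sigma>" using False assms by simp
  then have m1: "m \<ge> 1" and ym: "\<bar>y\<bar>/\<sigma> \<le> m" unfolding m_def by linarith+
  have in_tail: "m \<le> k" if "\<bar>y\<bar> \<le> \<sigma> * real k" for k
    using that assms unfolding m_def by (simp add: field_simps nat_le_iff ceiling_le_iff)
  have "(\<Sum>k\<le>N. (if \<bar>y\<bar> \<le> \<sigma> * real k then \<bar>y\<bar>^3 else 0) / (real k)\<^sup>2)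
      \<le> (\<Sum>k\<le>N. if k \<in> {m..N} then \<bar>y\<bar>^3 * (1 / (real k)\<^sup>2) else 0)"
    using in_tail by (intro sum_mono) auto
  also have "\<dots> = (\<Sum>k\<in>{..N} \<inter> {m..N}. \<bar>y\<bar>^3 * (1 / (real k)\<^sup>2))"
    by (rule sum.inter_restrict[symmetric]) simp
  also have "{..N} \<inter> {m..N} = {m..N}" by auto
  also have "(\<Sum>k\<in>{m..N}. \<bar>y\<bar>^3 * (1 / (real k)\<^sup>2)) = \<bar>y\<bar>^3 * (\<Sum>k\<in>{m..N}. 1 / (real k)\<^sup>2)"
    by (simp add: sum_distrib_left)
  also have "\<dots> \<le> \<bar>y\<bar>^3 * (2 / m)" by (intro mult_left_mono sum_inverse_squares_tail_le m1) auto
  also have "\<dots> = 2 * y\<^sup>2 * (\<bar>y\<bar> / m)" by (simp add: power2_eq_square power3_eq_cube)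
  also have "\<dots> \<le> 2 * y\<^sup>2 * \<sigma>"
    using ym m1 assms by (intro mult_left_mono) (auto simp: field_simps)
  finally show ?thesis by (simp add: algebra_simps)
qed (use assms in simp)

lemma summable_sqrt_div_square: "summable (\<lambda>k. sqrt (real k) / (real k)\<^sup>2)"
proof -
  have "summable (\<lambda>k. real k powr (-3/2))" by (subst summable_real_powr_iff) simp
  moreover have "real k powr (-3/2) = sqrt (real k) / (real k)\<^sup>2" if "k \<ge> 1" for k :: nat
  proof -
    have "real k powr (-3/2) = real k powr (1/2 - 2)" by simp
    also have "\<dots> = real k powr (1/2) / real k powr 2" by (rule powr_diff)
    finally show ?thesis using that by (simp add: powr_half_sqrt powr_numeral)
  qed
  then have "eventually (\<lambda>k. real k powr (-3/2) = sqrt (real k) / (real k)\<^sup>2) sequentially"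
    by (intro eventually_mono[OF eventually_ge_at_top[of 1]])
  ultimately show ?thesis by (rule summable_cong[THEN iffD1, rotated])
qed

lemma summable_inverse_square: "summable (\<lambda>k. 1 / (real k)\<^sup>2)"
  using inverse_power_summable[of 2, where 'a=real] by (simp add: inverse_eq_divide)

subsection \<open>Moments of sums of independent, bounded, centred variables\<close>

context prob_space
begin

definition centred_family :: "('i \<Rightarrow> 'a \<Rightarrow> real) \<Rightarrow> 'i set \<Rightarrow> bool" where
  "centred_family W J \<longleftrightarrow> indep_vars (\<lambda>_. borel) W J \<and>
     (\<forall>j\<in>J. bounded_on (space M) (W j) \<and> expectation (W j) = 0)"

lemma centred_family_measurable:
  "centred_family W J \<Longrightarrow> j \<in> J \<Longrightarrow> W j \<in> borel_measurable M"
  by (auto simp: centred_family_def indep_vars_def)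

lemma centred_family_sum:
  assumes "centred_family W J"
  shows "(\<lambda>\<omega>. \<Sum>j\<in>J. W j \<omega>) \<in> borel_measurable M"
    and "bounded_on (space M) (\<lambda>\<omega>. \<Sum>j\<in>J. W j \<omega>)"
    and "expectation (\<lambda>\<omega>. \<Sum>j\<in>J. W j \<omega>) = 0"
proof -
  have m: "W j \<in> borel_measurable M" if "j \<in> J" for j
    using assms that by (rule centred_family_measurable)
  have b: "bounded_on (space M) (W j)" if "j \<in> J" for j
    using assms that by (simp add: centred_family_def)
  show "(\<lambda>\<omega>. \<Sum>j\<in>J. W j \<omega>) \<in> borel_measurable M" using m by auto
  show "bounded_on (space M) (\<lambda>\<omega>. \<Sum>j\<in>J. W j \<omega>)" using b by (rule bounded_on_sum)
  have "expectation (\<lambda>\<omega>. \<Sum>j\<in>J. W j \<omega>) = (\<Sum>j\<in>J. expectation (W j))"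
    using m b by (intro Bochner_Integration.integral_sum integrable_bounded_on)
  then show "expectation (\<lambda>\<omega>. \<Sum>j\<in>J. W j \<omega>) = 0" using assms by (simp add: centred_family_def)
qed

lemma centred_family_insert:
  assumes "centred_family W (insert j J)" "finite J" "j \<notin> J"
  shows "centred_family W J"
    and "indep_var borel (W j) borel (\<lambda>\<omega>. \<Sum>i\<in>J. W i \<omega>)"
    and "W j \<in> borel_measurable M" "bounded_on (space M) (W j)" "expectation (W j) = 0"
proof -
  have ind: "indep_vars (\<lambda>_. borel) W (insert j J)" using assms(1) by (simp add: centred_family_def)
  show "centred_family W J"
    using assms(1) indep_vars_subset[OF ind] by (auto simp: centred_family_def)
  show "indep_var borel (W j) borel (\<lambda>\<omega>. \<Sum>i\<in>J. W i \<omega>)"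
    using assms(2,3) ind by (rule indep_vars_sum)
  show "W j \<in> borel_measurable M" using assms(1) by (rule centred_family_measurable) simp
  show "bounded_on (space M) (W j)" "expectation (W j) = 0"
    using assms(1) by (auto simp: centred_family_def)
qed

lemma indep_expectation_mult:
  fixes X Y :: "'a \<Rightarrow> real" and f g :: "real \<Rightarrow> real"
  assumes "indep_var borel X borel Y" "f \<in> borel_measurable borel" "g \<in> borel_measurable borel"
    "integrable M (\<lambda>\<omega>. f (X \<omega>))" "integrable M (\<lambda>\<omega>. g (Y \<omega>))"
  shows "(\<integral>\<omega>. f (X \<omega>) * g (Y \<omega>) \<partial>M) = (\<integral>\<omega>. f (X \<omega>) \<partial>M) * (\<integral>\<omega>. g (Y \<omega>) \<partial>M)"
proof -
  have "indep_var borel (f \<circ> X) borel (g \<circ> Y)"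
    by (rule indep_var_compose[OF assms(1-3)])
  from indep_var_lebesgue_integral[OF this] assms(4,5) show ?thesis by (simp add: comp_def)
qed

text \<open>(E|f|)^2 \<le> E f^2, since E(|f| - E|f|)^2 \<ge> 0.\<close>
lemma expectation_abs_square_le:
  fixes f :: "'a \<Rightarrow> real"
  assumes "integrable M (\<lambda>\<omega>. (f \<omega>)\<^sup>2)" "integrable M f" "f \<in> borel_measurable M"
  shows "(\<integral>\<omega>. \<bar>f \<omega>\<bar> \<partial>M)\<^sup>2 \<le> (\<integral>\<omega>. (f \<omega>)\<^sup>2 \<partial>M)"
proof -
  define a where "a = (\<integral>\<omega>. \<bar>f \<omega>\<bar> \<partial>M)"
  have "0 \<le> (\<integral>\<omega>. (\<bar>f \<omega>\<bar> - a)\<^sup>2 \<partial>M)" by (rule integral_nonneg_AE) auto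
  also have "(\<lambda>\<omega>. (\<bar>f \<omega>\<bar> - a)\<^sup>2) = (\<lambda>\<omega>. (f \<omega>)\<^sup>2 - 2 * a * \<bar>f \<omega>\<bar> + a\<^sup>2)"
    by (auto simp: power2_eq_square algebra_simps)
  also have "(\<integral>\<omega>. (f \<omega>)\<^sup>2 - 2 * a * \<bar>f \<omega>\<bar> + a\<^sup>2 \<partial>M) = (\<integral>\<omega>. (f \<omega>)\<^sup>2 \<partial>M) - 2 * a * a + a\<^sup>2"
    using assms by (simp add: a_def prob_space)
  finally show ?thesis by (simp add: a_def power2_eq_square)
qed

lemma second_moment_centred_sum:
  fixes W :: "'i \<Rightarrow> 'a \<Rightarrow> real"
  assumes "finite J" "centred_family W J"
  shows "expectation (\<lambda>\<omega>. (\<Sum>j\<in>J. W j \<omega>)\<^sup>2) = (\<Sum>j\<in>J. expectation (\<lambda>\<omega>. (W j \<omega>)\<^sup>2))"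
  using assms
proof (induction J rule: finite_induct)
  case (insert j J)
  define T where "T \<omega> = (\<Sum>i\<in>J. W i \<omega>)" for \<omega>
  note split = centred_family_insert[OF insert.prems insert.hyps(1,2), folded T_def]
  note sumJ = centred_family_sum[OF split(1), folded T_def]
  have "expectation (\<lambda>\<omega>. (\<Sum>i\<in>insert j J. W i \<omega>)\<^sup>2)
      = expectation (\<lambda>\<omega>. (W j \<omega>)\<^sup>2 + 2 * (W j \<omega> * T \<omega>) + (T \<omega>)\<^sup>2)"
    using insert.hyps by (simp add: T_def power2_eq_square algebra_simps)
  also have "\<dots> = expectation (\<lambda>\<omega>. (W j \<omega>)\<^sup>2) + 2 * expectation (\<lambda>\<omega>. W j \<omega> * T \<omega>)
                  + expectation (\<lambda>\<omega>. (T \<omega>)\<^sup>2)"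
    using split sumJ by (simp add: integrable_bounded_on bounded_on_power bounded_on_mult)
  also have "expectation (\<lambda>\<omega>. W j \<omega> * T \<omega>) = expectation (W j) * expectation T"
    using indep_expectation_mult[OF split(2), of "\<lambda>x. x" "\<lambda>x. x"] split sumJ
    by (simp add: integrable_bounded_on)
  also have "expectation (\<lambda>\<omega>. (T \<omega>)\<^sup>2) = (\<Sum>i\<in>J. expectation (\<lambda>\<omega>. (W i \<omega>)\<^sup>2))"
    unfolding T_def using insert.IH split(1) by simp
  finally show ?case using insert.hyps split sumJ by simp
qed simp

lemma second_moment_centred_sum_le:
  fixes W :: "'i \<Rightarrow> 'a \<Rightarrow> real" and v :: real
  assumes "finite J" "centred_family W J" "\<And>j. j \<in> J \<Longrightarrow> expectation (\<lambda>\<omega>. (W j \<omega>)\<^sup>2) \<le> v"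
  shows "expectation (\<lambda>\<omega>. (\<Sum>j\<in>J. W j \<omega>)\<^sup>2) \<le> card J * v"
  using sum_mono[of J _ "\<lambda>_. v"] assms by (simp add: second_moment_centred_sum)

text \<open>Fourth moment of the sum of two independent, bounded, centred variables: in the binomial
  expansion the odd cross moments vanish.\<close>
lemma fourth_moment_indep_add:
  fixes U V :: "'a \<Rightarrow> real"
  assumes ind: "indep_var borel U borel V"
    and meas: "U \<in> borel_measurable M" "V \<in> borel_measurable M"
    and bnd: "bounded_on (space M) U" "bounded_on (space M) V"
    and centred: "expectation U = 0" "expectation V = 0"
  shows "expectation (\<lambda>\<omega>. (U \<omega> + V \<omega>)^4)
       = expectation (\<lambda>\<omega>. (U \<omega>)^4) + 6 * (expectation (\<lambda>\<omega>. (U \<omega>)^2) * expectation (\<lambda>\<omega>. (V \<omega>)^2))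
         + expectation (\<lambda>\<omega>. (V \<omega>)^4)"
proof -
  have int: "integrable M (\<lambda>\<omega>. (U \<omega>)^a * (V \<omega>)^b)" for a b
    using meas bnd by (intro integrable_bounded_on bounded_on_mult bounded_on_power) auto
  have mult: "expectation (\<lambda>\<omega>. (U \<omega>)^a * (V \<omega>)^b)
      = expectation (\<lambda>\<omega>. (U \<omega>)^a) * expectation (\<lambda>\<omega>. (V \<omega>)^b)" for a b
    using meas bnd by (intro indep_expectation_mult ind integrable_bounded_on bounded_on_power) auto
  have "expectation (\<lambda>\<omega>. (U \<omega> + V \<omega>)^4)
      = expectation (\<lambda>\<omega>. (U \<omega>)^4 * (V \<omega>)^0 + 4 * ((U \<omega>)^3 * (V \<omega>)^1)
          + 6 * ((U \<omega>)^2 * (V \<omega>)^2) + 4 * ((U \<omega>)^1 * (V \<omega>)^3) + (U \<omega>)^0 * (V \<omega>)^4)"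
    by (simp add: power4_eq_xxxx power3_eq_cube power2_eq_square algebra_simps)
  also have "\<dots> = expectation (\<lambda>\<omega>. (U \<omega>)^4 * (V \<omega>)^0)
      + 4 * expectation (\<lambda>\<omega>. (U \<omega>)^3 * (V \<omega>)^1) + 6 * expectation (\<lambda>\<omega>. (U \<omega>)^2 * (V \<omega>)^2)
      + 4 * expectation (\<lambda>\<omega>. (U \<omega>)^1 * (V \<omega>)^3) + expectation (\<lambda>\<omega>. (U \<omega>)^0 * (V \<omega>)^4)"
    using int[of 4 0] int[of 3 1] int[of 2 2] int[of 1 3] int[of 0 4] by simp
  finally show ?thesis unfolding mult using centred by (simp add: prob_space)
qed

text \<open>Third absolute moment of the sum of independent, bounded V and centred U: the cross term
  V|V|U in the expansion abs_add_cube_le has mean zero.\<close>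
lemma third_abs_moment_indep_add_le:
  fixes U V :: "'a \<Rightarrow> real"
  assumes ind: "indep_var borel U borel V"
    and meas: "U \<in> borel_measurable M" "V \<in> borel_measurable M"
    and bnd: "bounded_on (space M) U" "bounded_on (space M) V"
    and centred: "expectation U = 0"
  shows "expectation (\<lambda>\<omega>. \<bar>V \<omega> + U \<omega>\<bar>^3)
       \<le> expectation (\<lambda>\<omega>. \<bar>V \<omega>\<bar>^3) + 3 * (expectation (\<lambda>\<omega>. (U \<omega>)\<^sup>2) * expectation (\<lambda>\<omega>. \<bar>V \<omega>\<bar>))
         + 3 * expectation (\<lambda>\<omega>. \<bar>U \<omega>\<bar>^3)"
proof -
  have cross1: "expectation (\<lambda>\<omega>. U \<omega> * (V \<omega> * \<bar>V \<omega>\<bar>)) = 0"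
    using indep_expectation_mult[OF ind, of "\<lambda>x. x" "\<lambda>x. x * \<bar>x\<bar>"] meas bnd centred
    by (simp add: integrable_bounded_on bounded_on_mult bounded_on_abs)
  have cross2: "expectation (\<lambda>\<omega>. (U \<omega>)\<^sup>2 * \<bar>V \<omega>\<bar>)
      = expectation (\<lambda>\<omega>. (U \<omega>)\<^sup>2) * expectation (\<lambda>\<omega>. \<bar>V \<omega>\<bar>)"
    using indep_expectation_mult[OF ind, of "\<lambda>x. x\<^sup>2" "\<lambda>x. \<bar>x\<bar>"] meas bnd
    by (simp add: integrable_bounded_on bounded_on_power bounded_on_abs)
  have "expectation (\<lambda>\<omega>. \<bar>V \<omega> + U \<omega>\<bar>^3)
      \<le> expectation (\<lambda>\<omega>. \<bar>V \<omega>\<bar>^3 + 3 * (U \<omega> * (V \<omega> * \<bar>V \<omega>\<bar>)) + 3 * ((U \<omega>)\<^sup>2 * \<bar>V \<omega>\<bar>)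
                          + 3 * \<bar>U \<omega>\<bar>^3)"
  proof (rule integral_mono)
    show "integrable M (\<lambda>\<omega>. \<bar>V \<omega> + U \<omega>\<bar>^3)"
      using meas bnd
      by (intro integrable_bounded_on bounded_on_power bounded_on_abs bounded_on_add) auto
    show "integrable M (\<lambda>\<omega>. \<bar>V \<omega>\<bar>^3 + 3 * (U \<omega> * (V \<omega> * \<bar>V \<omega>\<bar>)) + 3 * ((U \<omega>)\<^sup>2 * \<bar>V \<omega>\<bar>)
                              + 3 * \<bar>U \<omega>\<bar>^3)"
      using meas bnd by (intro integrable_bounded_on bounded_on_add bounded_on_mult bounded_on_power
                          bounded_on_abs bounded_on_const) auto
    fix \<omega>
    show "\<bar>V \<omega> + U \<omega>\<bar>^3 \<le> \<bar>V \<omega>\<bar>^3 + 3 * (U \<omega> * (V \<omega> * \<bar>V \<omega>\<bar>)) + 3 * ((U \<omega>)\<^sup>2 * \<bar>V \<omega>\<bar>)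
                                  + 3 * \<bar>U \<omega>\<bar>^3"
      using abs_add_cube_le[of "V \<omega>" "U \<omega>"] by (simp add: algebra_simps)
  qed
  also have "\<dots> = expectation (\<lambda>\<omega>. \<bar>V \<omega>\<bar>^3) + 3 * expectation (\<lambda>\<omega>. U \<omega> * (V \<omega> * \<bar>V \<omega>\<bar>))
       + 3 * expectation (\<lambda>\<omega>. (U \<omega>)\<^sup>2 * \<bar>V \<omega>\<bar>) + 3 * expectation (\<lambda>\<omega>. \<bar>U \<omega>\<bar>^3)"
    using meas bnd
    by (simp add: integrable_bounded_on bounded_on_mult bounded_on_power bounded_on_abs)
  finally show ?thesis unfolding cross1 cross2 by simp
qed

lemma fourth_moment_centred_sum_le:
  fixes W :: "'i \<Rightarrow> 'a \<Rightarrow> real" and v r :: real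
  assumes "finite J" "centred_family W J" "v \<ge> 0"
    "\<And>j. j \<in> J \<Longrightarrow> expectation (\<lambda>\<omega>. (W j \<omega>)\<^sup>2) \<le> v"
    "\<And>j. j \<in> J \<Longrightarrow> expectation (\<lambda>\<omega>. (W j \<omega>)^4) \<le> r"
  shows "expectation (\<lambda>\<omega>. (\<Sum>j\<in>J. W j \<omega>)^4) \<le> card J * r + 3 * (card J)\<^sup>2 * v\<^sup>2"
  using assms(1,2,4,5)
proof (induction J rule: finite_induct)
  case (insert j J)
  define T where "T \<omega> = (\<Sum>i\<in>J. W i \<omega>)" for \<omega>
  note split = centred_family_insert[OF insert.prems(1) insert.hyps(1,2), folded T_def]
  note sumJ = centred_family_sum[OF split(1), folded T_def]
  have T2: "expectation (\<lambda>\<omega>. (T \<omega>)\<^sup>2) \<le> card J * v"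
    unfolding T_def using insert split(1) by (intro second_moment_centred_sum_le) auto
  have T4: "expectation (\<lambda>\<omega>. (T \<omega>)^4) \<le> card J * r + 3 * (card J)\<^sup>2 * v\<^sup>2"
    unfolding T_def using insert split(1) by auto
  have "expectation (\<lambda>\<omega>. (\<Sum>i\<in>insert j J. W i \<omega>)^4) = expectation (\<lambda>\<omega>. (W j \<omega> + T \<omega>)^4)"
    using insert.hyps by (simp add: T_def)
  also have "\<dots> = expectation (\<lambda>\<omega>. (W j \<omega>)^4)
      + 6 * (expectation (\<lambda>\<omega>. (W j \<omega>)^2) * expectation (\<lambda>\<omega>. (T \<omega>)^2)) + expectation (\<lambda>\<omega>. (T \<omega>)^4)"
    using split sumJ by (intro fourth_moment_indep_add) auto
  also have "\<dots> \<le> r + 6 * (v * (card J * v)) + (card J * r + 3 * (card J)\<^sup>2 * v\<^sup>2)"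
    using insert.prems T2 T4 \<open>v \<ge> 0\<close> by (intro add_mono mult_left_mono mult_mono) auto
  also have "\<dots> \<le> card (insert j J) * r + 3 * (card (insert j J))\<^sup>2 * v\<^sup>2"
    using insert.hyps \<open>v \<ge> 0\<close> by (simp add: power2_eq_square algebra_simps)
  finally show ?case .
qed simp

text \<open>Third absolute moment: if E W_j^2 \<le> v and E|W_j|^3 \<le> r, then
  E|\<Sum> W_j|^3 \<le> 3 n sqrt(n v) v + 3 n r, by induction with third_abs_moment_indep_add_le
  and E|T| \<le> sqrt (E T^2).\<close>
lemma third_abs_moment_centred_sum_le:
  fixes W :: "'i \<Rightarrow> 'a \<Rightarrow> real" and v r :: real
  assumes "finite J" "centred_family W J" "v \<ge> 0"
    "\<And>j. j \<in> J \<Longrightarrow> expectation (\<lambda>\<omega>. (W j \<omega>)\<^sup>2) \<le> v"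
    "\<And>j. j \<in> J \<Longrightarrow> expectation (\<lambda>\<omega>. \<bar>W j \<omega>\<bar>^3) \<le> r"
  shows "expectation (\<lambda>\<omega>. \<bar>\<Sum>j\<in>J. W j \<omega>\<bar>^3) \<le> 3 * card J * sqrt (card J * v) * v + 3 * card J * r"
  using assms(1,2,4,5)
proof (induction J rule: finite_induct)
  case (insert j J)
  define T where "T \<omega> = (\<Sum>i\<in>J. W i \<omega>)" for \<omega>
  note split = centred_family_insert[OF insert.prems(1) insert.hyps(1,2), folded T_def]
  note sumJ = centred_family_sum[OF split(1), folded T_def]
  have T3: "expectation (\<lambda>\<omega>. \<bar>T \<omega>\<bar>^3) \<le> 3 * card J * sqrt (card J * v) * v + 3 * card J * r"
    unfolding T_def using insert split(1) by auto
  have "expectation (\<lambda>\<omega>. (T \<omega>)\<^sup>2) \<le> card J * v"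
    unfolding T_def using insert split(1) by (intro second_moment_centred_sum_le) auto
  moreover have "(expectation (\<lambda>\<omega>. \<bar>T \<omega>\<bar>))\<^sup>2 \<le> expectation (\<lambda>\<omega>. (T \<omega>)\<^sup>2)"
    using sumJ by (intro expectation_abs_square_le integrable_bounded_on bounded_on_power) auto
  ultimately have T1: "expectation (\<lambda>\<omega>. \<bar>T \<omega>\<bar>) \<le> sqrt (card J * v)"
    by (intro real_le_rsqrt) linarith
  have "expectation (\<lambda>\<omega>. \<bar>\<Sum>i\<in>insert j J. W i \<omega>\<bar>^3) = expectation (\<lambda>\<omega>. \<bar>T \<omega> + W j \<omega>\<bar>^3)"
    using insert.hyps by (simp add: T_def add.commute)
  also have "\<dots> \<le> expectation (\<lambda>\<omega>. \<bar>T \<omega>\<bar>^3)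
      + 3 * (expectation (\<lambda>\<omega>. (W j \<omega>)\<^sup>2) * expectation (\<lambda>\<omega>. \<bar>T \<omega>\<bar>))
      + 3 * expectation (\<lambda>\<omega>. \<bar>W j \<omega>\<bar>^3)"
    using split sumJ by (intro third_abs_moment_indep_add_le) auto
  also have "\<dots> \<le> (3 * card J * sqrt (card J * v) * v + 3 * card J * r)
                  + 3 * (v * sqrt (card J * v)) + 3 * r"
    using T3 T1 insert.prems \<open>v \<ge> 0\<close>
    by (intro add_mono mult_left_mono mult_mono) (auto intro: integral_nonneg_AE)
  also have "\<dots> \<le> 3 * card (insert j J) * sqrt (card (insert j J) * v) * v
                  + 3 * card (insert j J) * r"
  proof -
    have s: "sqrt (card J * v) \<le> sqrt (card (insert j J) * v)"
      using insert.hyps \<open>v \<ge> 0\<close> by (auto intro: mult_right_mono)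
    have "3 * card J * sqrt (card J * v) * v + 3 * (v * sqrt (card J * v))
        = 3 * (card J + 1) * (sqrt (card J * v) * v)" by (simp add: algebra_simps)
    also have "\<dots> \<le> 3 * (card J + 1) * (sqrt (card (insert j J) * v) * v)"
      using s \<open>v \<ge> 0\<close> by (intro mult_left_mono mult_right_mono) auto
    finally show ?thesis using insert.hyps by (simp add: algebra_simps)
  qed
  finally show ?case .
qed simp

end

subsection \<open>Truncation\<close>

definition trunc :: "real \<Rightarrow> nat \<Rightarrow> real \<Rightarrow> real" where
  "trunc s k y = (if \<bar>y\<bar> \<le> s * real k then y else 0)"

lemma trunc_measurable[measurable]: "trunc s k \<in> borel_measurable borel"
  unfolding trunc_def by measurable

lemma trunc_abs_le: "\<bar>trunc s k y\<bar> \<le> \<bar>y\<bar>"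
  unfolding trunc_def by auto

lemma trunc_abs_le_level: "s \<ge> 0 \<Longrightarrow> \<bar>trunc s k y\<bar> \<le> s * real k"
  unfolding trunc_def by auto

locale triangular_array = prob_space M for M :: "'a measure" +
  fixes X :: "'a \<Rightarrow> real" and Xa :: "nat \<Rightarrow> nat \<Rightarrow> 'a \<Rightarrow> real" and \<mu> \<sigma> :: real
  assumes Xm[measurable]: "X \<in> borel_measurable M"
    and X2: "integrable M (\<lambda>\<omega>. (X \<omega>)\<^sup>2)"
    and mu: "\<mu> = expectation X"
    and sig: "\<sigma> = sqrt (variance X)"
    and ind: "indep_vars (\<lambda>_. borel) (\<lambda>(i, k). Xa i k) {(i, k). 1 \<le> i \<and> i \<le> k}"
    and dist: "\<And>i k. 1 \<le> i \<Longrightarrow> i \<le> k \<Longrightarrow> distr M borel (Xa i k) = distr M borel X"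
begin

lemma Xa_measurable[measurable]: "1 \<le> i \<Longrightarrow> i \<le> k \<Longrightarrow> Xa i k \<in> borel_measurable M"
  using ind by (auto simp: indep_vars_def)

lemma X_integrable: "integrable M X"
  by (rule square_integrable_imp_integrable[OF Xm X2])

lemma expectation_Xa_eq:
  fixes f :: "real \<Rightarrow> real"
  assumes "1 \<le> i" "i \<le> k" "f \<in> borel_measurable borel"
  shows "(\<integral>\<omega>. f (Xa i k \<omega>) \<partial>M) = (\<integral>\<omega>. f (X \<omega>) \<partial>M)"
proof -
  have "(\<integral>\<omega>. f (Xa i k \<omega>) \<partial>M) = integral\<^sup>L (distr M borel (Xa i k)) f"
    by (rule integral_distr[OF Xa_measurable[OF assms(1,2)] assms(3), symmetric])
  also have "\<dots> = integral\<^sup>L (distr M borel X) f" using dist[OF assms(1,2)] by simp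
  also have "\<dots> = (\<integral>\<omega>. f (X \<omega>) \<partial>M)" by (rule integral_distr[OF Xm assms(3)])
  finally show ?thesis .
qed

lemma prob_Xa_eq:
  assumes "1 \<le> i" "i \<le> k" "B \<in> sets borel"
  shows "prob {\<omega> \<in> space M. Xa i k \<omega> \<in> B} = prob {\<omega> \<in> space M. X \<omega> \<in> B}"
proof -
  have "prob {\<omega> \<in> space M. Xa i k \<omega> \<in> B} = measure (distr M borel (Xa i k)) B"
    using assms by (subst measure_distr) (auto simp: vimage_def Int_def conj_commute)
  also have "\<dots> = measure (distr M borel X) B" using dist[OF assms(1,2)] by simp
  also have "\<dots> = prob {\<omega> \<in> space M. X \<omega> \<in> B}"
    using assms by (subst measure_distr) (auto simp: vimage_def Int_def conj_commute)
  finally show ?thesis .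
qed

lemma centred_X_expectation: "expectation (\<lambda>\<omega>. X \<omega> - \<mu>) = 0"
  using X_integrable by (simp add: mu prob_space)

lemma variance_nonneg: "variance X \<ge> 0"
  by (rule integral_nonneg_AE) auto

lemma sigma_nonneg: "\<sigma> \<ge> 0" by (simp add: sig)

lemma centred_X_sq_expectation: "expectation (\<lambda>\<omega>. (X \<omega> - \<mu>)\<^sup>2) = \<sigma>\<^sup>2"
  using variance_nonneg by (simp add: sig mu)

lemma centred_X_sq_integrable: "integrable M (\<lambda>\<omega>. (X \<omega> - \<mu>)\<^sup>2)"
proof -
  have "(\<lambda>\<omega>. (X \<omega> - \<mu>)\<^sup>2) = (\<lambda>\<omega>. (X \<omega>)\<^sup>2 - 2 * \<mu> * X \<omega> + \<mu>\<^sup>2)"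
    by (auto simp: power2_eq_square algebra_simps)
  then show ?thesis using X2 X_integrable by simp
qed

abbreviation "truncX k \<omega> \<equiv> trunc \<sigma> k (X \<omega> - \<mu>)"
abbreviation "truncXa i k \<omega> \<equiv> trunc \<sigma> k (Xa i k \<omega> - \<mu>)"

definition tmean :: "nat \<Rightarrow> real" where
  "tmean k = expectation (\<lambda>\<omega>. truncX k \<omega>)"
definition tsecond :: "nat \<Rightarrow> real" where
  "tsecond k = expectation (\<lambda>\<omega>. (truncX k \<omega>)\<^sup>2)"
definition tabs3 :: "nat \<Rightarrow> real" where
  "tabs3 k = expectation (\<lambda>\<omega>. \<bar>truncX k \<omega>\<bar>^3)"
definition tfourth :: "nat \<Rightarrow> real" where
  "tfourth k = expectation (\<lambda>\<omega>. (truncX k \<omega>)^4)"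

lemma tabs3_nonneg: "tabs3 k \<ge> 0"
  unfolding tabs3_def by (rule integral_nonneg_AE) auto

lemma tfourth_nonneg: "tfourth k \<ge> 0"
  unfolding tfourth_def by (rule integral_nonneg_AE) (auto simp: zero_le_even_power)

lemma trunc_bounded: "bounded_on (space M) (\<lambda>\<omega>. trunc \<sigma> k (f \<omega>))"
  using trunc_abs_le_level[OF sigma_nonneg] by (intro bounded_onI) blast

lemma trunc_pow_integrable: "integrable M (\<lambda>\<omega>. (truncX k \<omega>)^p)"
  by (intro integrable_bounded_on bounded_on_power trunc_bounded) auto

lemma trunc_abs_pow_integrable: "integrable M (\<lambda>\<omega>. \<bar>truncX k \<omega>\<bar>^p)"
  by (intro integrable_bounded_on bounded_on_power bounded_on_abs trunc_bounded) auto

lemma trunc_integrable: "integrable M (\<lambda>\<omega>. truncX k \<omega>)"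
  by (intro integrable_bounded_on trunc_bounded) auto

lemma tsecond_le: "tsecond k \<le> \<sigma>\<^sup>2"
proof -
  have "tsecond k \<le> expectation (\<lambda>\<omega>. (X \<omega> - \<mu>)\<^sup>2)"
    unfolding tsecond_def
  proof (rule integral_mono[OF trunc_pow_integrable centred_X_sq_integrable])
    fix \<omega> show "(truncX k \<omega>)\<^sup>2 \<le> (X \<omega> - \<mu>)\<^sup>2"
      using trunc_abs_le[of \<sigma> k "X \<omega> - \<mu>"] by (simp add: abs_le_square_iff)
  qed
  then show ?thesis by (simp add: centred_X_sq_expectation)
qed

text \<open>Since E(X - mu) = 0, the truncated mean is minus the mean of the discarded part,
  which is at most E(X - mu)^2 / (sigma k).\<close>
lemma tmean_bound: "k \<ge> 1 \<Longrightarrow> \<bar>tmean k\<bar> \<le> \<sigma> / k"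
proof (cases "\<sigma> = 0")
  case True
  then have "\<And>y. trunc \<sigma> k y = 0" by (simp add: trunc_def)
  then show ?thesis unfolding tmean_def by (simp add: True)
next
  case False
  assume k: "k \<ge> 1"
  have sp: "\<sigma> > 0" using False sigma_nonneg by simp
  have "tmean k = expectation (\<lambda>\<omega>. X \<omega> - \<mu>) - expectation (\<lambda>\<omega>. (X \<omega> - \<mu>) - truncX k \<omega>)"
    unfolding tmean_def using X_integrable trunc_integrable by simp
  then have "\<bar>tmean k\<bar> = \<bar>expectation (\<lambda>\<omega>. (X \<omega> - \<mu>) - truncX k \<omega>)\<bar>"
    using centred_X_expectation by simp
  also have "\<dots> \<le> expectation (\<lambda>\<omega>. \<bar>(X \<omega> - \<mu>) - truncX k \<omega>\<bar>)"
    by (rule integral_abs_bound)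
  also have "\<dots> \<le> expectation (\<lambda>\<omega>. (X \<omega> - \<mu>)\<^sup>2 / (\<sigma> * k))"
  proof (rule integral_mono)
    show "integrable M (\<lambda>\<omega>. \<bar>(X \<omega> - \<mu>) - truncX k \<omega>\<bar>)" using X_integrable trunc_integrable by simp
    show "integrable M (\<lambda>\<omega>. (X \<omega> - \<mu>)\<^sup>2 / (\<sigma> * k))" using centred_X_sq_integrable by simp
    fix \<omega>
    define y where "y = X \<omega> - \<mu>"
    have "\<bar>y - trunc \<sigma> k y\<bar> \<le> y\<^sup>2 / (\<sigma> * k)"
    proof (cases "\<bar>y\<bar> \<le> \<sigma> * real k")
      case True then show ?thesis by (simp add: trunc_def)
    next
      case False
      then have "\<sigma> * k \<le> \<bar>y\<bar>" by simp
      then have "\<bar>y\<bar> * (\<sigma> * k) \<le> \<bar>y\<bar> * \<bar>y\<bar>" by (intro mult_left_mono) auto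
      then have "\<bar>y\<bar> \<le> y\<^sup>2 / (\<sigma> * k)" using sp k by (simp add: field_simps power2_eq_square)
      then show ?thesis using False by (simp add: trunc_def)
    qed
    then show "\<bar>(X \<omega> - \<mu>) - truncX k \<omega>\<bar> \<le> (X \<omega> - \<mu>)\<^sup>2 / (\<sigma> * k)" by (simp add: y_def)
  qed
  also have "\<dots> = \<sigma>\<^sup>2 / (\<sigma> * k)" using centred_X_sq_expectation by simp
  also have "\<dots> = \<sigma> / k" using sp by (simp add: power2_eq_square)
  finally show ?thesis .
qed

text \<open>The exceedance probabilities are small: sum_k k P(|X - mu| > sigma k) \<le> 1, because
  pointwise sum_k k [sigma k < |y|] \<le> y^2/sigma^2.  This controls the effect of truncation.\<close>
lemma summable_exceedance: "summable (\<lambda>k. real k * prob {\<omega> \<in> space M. \<sigma> * real k < \<bar>X \<omega> - \<mu>\<bar>})"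
proof (cases "\<sigma> = 0")
  case True
  have "AE \<omega> in M. (X \<omega> - \<mu>)\<^sup>2 = 0"
    using integral_nonneg_eq_0_iff_AE[OF centred_X_sq_integrable] centred_X_sq_expectation True
    by simp
  then have "AE \<omega> in M. \<not> (\<sigma> * real k < \<bar>X \<omega> - \<mu>\<bar>)" for k
    by eventually_elim (simp add: True)
  then have "prob {\<omega> \<in> space M. \<sigma> * real k < \<bar>X \<omega> - \<mu>\<bar>} = 0" for k
    by (simp add: measure_def emeasure_eq_0_AE)
  then show ?thesis by simp
next
  case False
  then have sp: "\<sigma> > 0" using sigma_nonneg by simp
  show ?thesis
  proof (rule bounded_imp_summable)
    show "0 \<le> real k * prob {\<omega> \<in> space M. \<sigma> * real k < \<bar>X \<omega> - \<mu>\<bar>}" for k by simp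
    fix N
    have "(\<Sum>k\<le>N. real k * prob {\<omega> \<in> space M. \<sigma> * real k < \<bar>X \<omega> - \<mu>\<bar>})
        = (\<Sum>k\<le>N. expectation (\<lambda>\<omega>. if \<sigma> * real k < \<bar>X \<omega> - \<mu>\<bar> then real k else 0))"
    proof (intro sum.cong refl)
      fix k
      have "real k * prob {\<omega> \<in> space M. \<sigma> * real k < \<bar>X \<omega> - \<mu>\<bar>}
          = expectation (\<lambda>\<omega>. real k * indicator {\<omega> \<in> space M. \<sigma> * real k < \<bar>X \<omega> - \<mu>\<bar>} \<omega>)"
        by (simp add: Int_absorb2)
      also have "\<dots> = expectation (\<lambda>\<omega>. if \<sigma> * real k < \<bar>X \<omega> - \<mu>\<bar> then real k else 0)"
        by (intro Bochner_Integration.integral_cong) (auto simp: indicator_def)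
      finally show "real k * prob {\<omega> \<in> space M. \<sigma> * real k < \<bar>X \<omega> - \<mu>\<bar>}
          = expectation (\<lambda>\<omega>. if \<sigma> * real k < \<bar>X \<omega> - \<mu>\<bar> then real k else 0)" .
    qed
    also have "\<dots> = expectation (\<lambda>\<omega>. \<Sum>k\<le>N. if \<sigma> * real k < \<bar>X \<omega> - \<mu>\<bar> then real k else 0)"
    proof (rule Bochner_Integration.integral_sum[symmetric])
      fix k show "integrable M (\<lambda>\<omega>. if \<sigma> * real k < \<bar>X \<omega> - \<mu>\<bar> then real k else 0)"
        by (intro integrable_bounded_on bounded_onI[of _ _ "real k"]) auto
    qed
    also have "\<dots> \<le> expectation (\<lambda>\<omega>. (X \<omega> - \<mu>)\<^sup>2 / \<sigma>\<^sup>2)"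
    proof (rule integral_mono)
      show "integrable M (\<lambda>\<omega>. \<Sum>k\<le>N. if \<sigma> * real k < \<bar>X \<omega> - \<mu>\<bar> then real k else 0)"
        by (intro integrable_bounded_on bounded_on_sum bounded_onI[of _ _ "real N"]) auto
      show "integrable M (\<lambda>\<omega>. (X \<omega> - \<mu>)\<^sup>2 / \<sigma>\<^sup>2)" using centred_X_sq_integrable by simp
      fix \<omega> show "(\<Sum>k\<le>N. if \<sigma> * real k < \<bar>X \<omega> - \<mu>\<bar> then real k else 0) \<le> (X \<omega> - \<mu>)\<^sup>2 / \<sigma>\<^sup>2"
        by (rule sum_indices_exceeded_le[OF sp])
    qed
    also have "\<dots> = 1" using centred_X_sq_expectation sp by simp
    finally show "(\<Sum>k\<le>N. real k * prob {\<omega> \<in> space M. \<sigma> * real k < \<bar>X \<omega> - \<mu>\<bar>}) \<le> 1" .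
  qed
qed

lemma summable_tabs3: "summable (\<lambda>k. tabs3 k / (real k)\<^sup>2)"
proof (cases "\<sigma> = 0")
  case True
  then have "\<And>k y. trunc \<sigma> k y = 0" by (simp add: trunc_def)
  then have "\<And>k. tabs3 k = 0" unfolding tabs3_def by simp
  then show ?thesis by simp
next
  case False
  then have sp: "\<sigma> > 0" using sigma_nonneg by simp
  show ?thesis
  proof (rule bounded_imp_summable)
    show "0 \<le> tabs3 k / (real k)\<^sup>2" for k
      using tabs3_nonneg by simp
    fix N
    have "(\<Sum>k\<le>N. tabs3 k / (real k)\<^sup>2) = (\<Sum>k\<le>N. expectation (\<lambda>\<omega>. \<bar>truncX k \<omega>\<bar>^3 / (real k)\<^sup>2))"
      unfolding tabs3_def by simp
    also have "\<dots> = expectation (\<lambda>\<omega>. \<Sum>k\<le>N. \<bar>truncX k \<omega>\<bar>^3 / (real k)\<^sup>2)"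
    proof (rule Bochner_Integration.integral_sum[symmetric])
      fix k show "integrable M (\<lambda>\<omega>. \<bar>truncX k \<omega>\<bar>^3 / (real k)\<^sup>2)"
        using trunc_abs_pow_integrable by simp
    qed
    also have "\<dots> \<le> expectation (\<lambda>\<omega>. 2 * \<sigma> * (X \<omega> - \<mu>)\<^sup>2)"
    proof (rule integral_mono)
      show "integrable M (\<lambda>\<omega>. \<Sum>k\<le>N. \<bar>truncX k \<omega>\<bar>^3 / (real k)\<^sup>2)"
        using trunc_abs_pow_integrable by simp
      show "integrable M (\<lambda>\<omega>. 2 * \<sigma> * (X \<omega> - \<mu>)\<^sup>2)" using centred_X_sq_integrable by simp
      fix \<omega>
      have "(\<Sum>k\<le>N. \<bar>truncX k \<omega>\<bar>^3 / (real k)\<^sup>2)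
          = (\<Sum>k\<le>N. (if \<bar>X \<omega> - \<mu>\<bar> \<le> \<sigma> * real k then \<bar>X \<omega> - \<mu>\<bar>^3 else 0) / (real k)\<^sup>2)"
        by (intro sum.cong) (auto simp: trunc_def)
      also have "\<dots> \<le> 2 * \<sigma> * (X \<omega> - \<mu>)\<^sup>2" by (rule sum_truncated_cubes_le[OF sp])
      finally show "(\<Sum>k\<le>N. \<bar>truncX k \<omega>\<bar>^3 / (real k)\<^sup>2) \<le> 2 * \<sigma> * (X \<omega> - \<mu>)\<^sup>2" .
    qed
    also have "\<dots> = 2 * \<sigma> * \<sigma>\<^sup>2" using centred_X_sq_expectation centred_X_sq_integrable by simp
    finally show "(\<Sum>k\<le>N. tabs3 k / (real k)\<^sup>2) \<le> 2 * \<sigma> * \<sigma>\<^sup>2" .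
  qed
qed

text \<open>The fourth truncated moment is controlled by the third one, since |trunc| \<le> sigma k.\<close>
lemma tfourth_le: "tfourth k \<le> \<sigma> * real k * tabs3 k"
proof -
  have "tfourth k \<le> expectation (\<lambda>\<omega>. \<sigma> * real k * \<bar>truncX k \<omega>\<bar>^3)"
    unfolding tfourth_def
  proof (rule integral_mono)
    show "integrable M (\<lambda>\<omega>. (truncX k \<omega>)^4)" by (rule trunc_pow_integrable)
    show "integrable M (\<lambda>\<omega>. \<sigma> * real k * \<bar>truncX k \<omega>\<bar>^3)" using trunc_abs_pow_integrable by simp
    fix \<omega>
    define t where "t = truncX k \<omega>"
    have t: "\<bar>t\<bar> \<le> \<sigma> * real k" unfolding t_def by (rule trunc_abs_le_level[OF sigma_nonneg])
    have "t^4 = \<bar>t\<bar> * \<bar>t\<bar>^3"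
      by (simp add: power_abs[symmetric] power3_eq_cube power4_eq_xxxx abs_mult[symmetric])
    also have "\<dots> \<le> \<sigma> * real k * \<bar>t\<bar>^3" using t by (intro mult_right_mono) auto
    finally show "(truncX k \<omega>)^4 \<le> \<sigma> * real k * \<bar>truncX k \<omega>\<bar>^3" by (simp add: t_def)
  qed
  then show ?thesis unfolding tabs3_def by simp
qed

lemma summable_tfourth: "summable (\<lambda>k. tfourth k / (real k)^3)"
proof (rule summable_comparison_test)
  show "summable (\<lambda>k. \<sigma> * (tabs3 k / (real k)\<^sup>2))" using summable_tabs3 by (rule summable_mult)
  show "\<exists>N. \<forall>n\<ge>N. norm (tfourth n / (real n)^3) \<le> \<sigma> * (tabs3 n / (real n)\<^sup>2)"
  proof (intro exI[of _ 1] allI impI)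
    fix n :: nat assume "n \<ge> 1"
    have "norm (tfourth n / (real n)^3) = tfourth n / (real n)^3" using tfourth_nonneg by simp
    also have "\<dots> \<le> \<sigma> * real n * tabs3 n / (real n)^3"
      using tfourth_le \<open>n \<ge> 1\<close> by (intro divide_right_mono) auto
    also have "\<dots> = \<sigma> * (tabs3 n / (real n)\<^sup>2)"
      using \<open>n \<ge> 1\<close> by (simp add: power2_eq_square power3_eq_cube field_simps)
    finally show "norm (tfourth n / (real n)^3) \<le> \<sigma> * (tabs3 n / (real n)\<^sup>2)" .
  qed
qed

definition row_indices :: "nat \<Rightarrow> (nat \<times> nat) set" where
  "row_indices k = (\<lambda>i. (i, k)) ` {1..k}"
definition entry :: "nat \<Rightarrow> nat \<times> nat \<Rightarrow> 'a \<Rightarrow> real" where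
  "entry k p \<omega> = trunc \<sigma> k ((\<lambda>(i, k). Xa i k) p \<omega> - \<mu>) - tmean k"
definition row_sum :: "nat \<Rightarrow> 'a \<Rightarrow> real" where
  "row_sum k \<omega> = (\<Sum>p\<in>row_indices k. entry k p \<omega>)"
definition trunc_row_mean :: "nat \<Rightarrow> 'a \<Rightarrow> real" where
  "trunc_row_mean k \<omega> = (\<Sum>i=1..k. truncXa i k \<omega>) / real k"
definition tvar :: "nat \<Rightarrow> real" where
  "tvar k = expectation (\<lambda>\<omega>. (truncX k \<omega> - tmean k)\<^sup>2)"

lemma row_subset: "row_indices k \<subseteq> {(i, k). 1 \<le> i \<and> i \<le> k}" by (auto simp: row_indices_def)
lemma finite_row: "finite (row_indices k)" by (simp add: row_indices_def)
lemma card_row: "card (row_indices k) = k"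
  unfolding row_indices_def by (subst card_image) (auto simp: inj_on_def)

lemma entries_indep: "indep_vars (\<lambda>_. borel) (entry k) (row_indices k)"
proof -
  have "indep_vars (\<lambda>_. borel) (\<lambda>(i, k). Xa i k) (row_indices k)"
    by (rule indep_vars_subset[OF ind row_subset])
  then have "indep_vars (\<lambda>_. borel)
      (\<lambda>p x. (\<lambda>y. trunc \<sigma> k (y - \<mu>) - tmean k) ((\<lambda>(i, k). Xa i k) p x)) (row_indices k)"
    by (rule indep_vars_compose2) auto
  then show ?thesis unfolding entry_def by simp
qed

lemma entry_eq: "entry k (i, k) \<omega> = truncXa i k \<omega> - tmean k" by (simp add: entry_def)

lemma row_sum_eq: "row_sum k \<omega> = (\<Sum>i=1..k. truncXa i k \<omega>) - real k * tmean k"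
proof -
  have "row_sum k \<omega> = (\<Sum>i=1..k. entry k (i, k) \<omega>)" unfolding row_sum_def row_indices_def
    by (subst sum.reindex) (auto simp: inj_on_def)
  also have "\<dots> = (\<Sum>i=1..k. truncXa i k \<omega>) - real k * tmean k"
    by (simp add: entry_eq sum_subtractf)
  finally show ?thesis .
qed

lemma trunc_row_mean_eq: "k \<ge> 1 \<Longrightarrow> trunc_row_mean k \<omega> = row_sum k \<omega> / real k + tmean k"
  unfolding trunc_row_mean_def row_sum_eq by (simp add: field_simps)

lemma entry_bounded: "bounded_on (space M) (entry k p)"
  unfolding entry_def by (intro bounded_on_diff trunc_bounded bounded_on_const)

lemma row_sum_bounded: "bounded_on (space M) (row_sum k)"
  unfolding row_sum_def by (intro bounded_on_sum entry_bounded)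

lemma trunc_row_mean_bounded: "bounded_on (space M) (trunc_row_mean k)"
  unfolding trunc_row_mean_def by (intro bounded_on_divide bounded_on_sum trunc_bounded)

lemma trunc_row_mean_measurable[measurable]: "trunc_row_mean k \<in> borel_measurable M"
  unfolding trunc_row_mean_def by measurable

lemma row_sum_measurable[measurable]: "row_sum k \<in> borel_measurable M"
proof -
  have "row_sum k = (\<lambda>\<omega>. (\<Sum>i=1..k. truncXa i k \<omega>) - real k * tmean k)" using row_sum_eq by auto
  also have "\<dots> \<in> borel_measurable M" by measurable
  finally show ?thesis .
qed

lemma expectation_entry:
  fixes f :: "real \<Rightarrow> real"
  assumes "p \<in> row_indices k" "f \<in> borel_measurable borel"
  shows "expectation (\<lambda>\<omega>. f (entry k p \<omega>)) = expectation (\<lambda>\<omega>. f (truncX k \<omega> - tmean k))"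
proof -
  obtain i where p: "p = (i, k)" "1 \<le> i" "i \<le> k" using assms unfolding row_indices_def by auto
  have "expectation (\<lambda>\<omega>. f (entry k p \<omega>))
      = expectation (\<lambda>\<omega>. (\<lambda>x. f (trunc \<sigma> k (x - \<mu>) - tmean k)) (Xa i k \<omega>))"
    by (simp add: p entry_eq)
  also have "\<dots> = expectation (\<lambda>\<omega>. (\<lambda>x. f (trunc \<sigma> k (x - \<mu>) - tmean k)) (X \<omega>))"
    using assms by (intro expectation_Xa_eq p) auto
  finally show ?thesis by simp
qed

lemma entry_mean: "p \<in> row_indices k \<Longrightarrow> expectation (entry k p) = 0"
  using expectation_entry[of p k "\<lambda>x. x"] trunc_integrable by (simp add: tmean_def prob_space)

lemma entry_second_moment: "p \<in> row_indices k \<Longrightarrow> expectation (\<lambda>\<omega>. (entry k p \<omega>)\<^sup>2) = tvar k"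
  using expectation_entry[of p k "\<lambda>x. x\<^sup>2"] by (simp add: tvar_def)

lemma tvar_eq: "tvar k = tsecond k - (tmean k)\<^sup>2"
proof -
  have "tvar k = expectation (\<lambda>\<omega>. (truncX k \<omega>)\<^sup>2 - 2 * tmean k * truncX k \<omega> + (tmean k)\<^sup>2)"
    unfolding tvar_def
    by (intro Bochner_Integration.integral_cong) (auto simp: power2_eq_square algebra_simps)
  also have "\<dots> = tsecond k - 2 * tmean k * tmean k + (tmean k)\<^sup>2"
    using trunc_pow_integrable[of k 2] trunc_integrable[of k]
    by (simp add: tsecond_def tmean_def prob_space)
  finally show ?thesis by (simp add: power2_eq_square)
qed

lemma tvar_le: "tvar k \<le> \<sigma>\<^sup>2" using tvar_eq tsecond_le[of k] by (smt (verit) zero_le_power2)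

lemma entry_fourth_moment:
  "p \<in> row_indices k \<Longrightarrow> expectation (\<lambda>\<omega>. (entry k p \<omega>)^4) \<le> 8 * (tfourth k + (tmean k)^4)"
proof -
  assume p: "p \<in> row_indices k"
  have "expectation (\<lambda>\<omega>. (entry k p \<omega>)^4) = expectation (\<lambda>\<omega>. (truncX k \<omega> - tmean k)^4)"
    using expectation_entry[OF p, of "\<lambda>x. x^4"] by simp
  also have "\<dots> \<le> expectation (\<lambda>\<omega>. 8 * ((truncX k \<omega>)^4 + (tmean k)^4))"
  proof (rule integral_mono)
    show "integrable M (\<lambda>\<omega>. (truncX k \<omega> - tmean k)^4)"
      by (intro integrable_bounded_on bounded_on_power bounded_on_diff trunc_bounded
            bounded_on_const) auto
    show "integrable M (\<lambda>\<omega>. 8 * ((truncX k \<omega>)^4 + (tmean k)^4))"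
      using trunc_pow_integrable[of k 4] by simp
    fix \<omega> show "(truncX k \<omega> - tmean k)^4 \<le> 8 * ((truncX k \<omega>)^4 + (tmean k)^4)"
      using add_pow4_le_8[of "truncX k \<omega>" "- tmean k"] by simp
  qed
  also have "\<dots> = 8 * (tfourth k + (tmean k)^4)"
    using trunc_pow_integrable[of k 4] by (simp add: tfourth_def prob_space)
  finally show ?thesis .
qed

lemma entry_third_moment:
  "p \<in> row_indices k \<Longrightarrow> expectation (\<lambda>\<omega>. \<bar>entry k p \<omega>\<bar>^3) \<le> 4 * (tabs3 k + \<bar>tmean k\<bar>^3)"
proof -
  assume p: "p \<in> row_indices k"
  have "expectation (\<lambda>\<omega>. \<bar>entry k p \<omega>\<bar>^3) = expectation (\<lambda>\<omega>. \<bar>truncX k \<omega> - tmean k\<bar>^3)"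
    using expectation_entry[OF p, of "\<lambda>x. \<bar>x\<bar>^3"] by simp
  also have "\<dots> \<le> expectation (\<lambda>\<omega>. 4 * (\<bar>truncX k \<omega>\<bar>^3 + \<bar>tmean k\<bar>^3))"
  proof (rule integral_mono)
    show "integrable M (\<lambda>\<omega>. \<bar>truncX k \<omega> - tmean k\<bar>^3)"
      by (intro integrable_bounded_on bounded_on_power bounded_on_abs bounded_on_diff trunc_bounded
            bounded_on_const) auto
    show "integrable M (\<lambda>\<omega>. 4 * (\<bar>truncX k \<omega>\<bar>^3 + \<bar>tmean k\<bar>^3))"
      using trunc_abs_pow_integrable[of k 3] by simp
    fix \<omega> show "\<bar>truncX k \<omega> - tmean k\<bar>^3 \<le> 4 * (\<bar>truncX k \<omega>\<bar>^3 + \<bar>tmean k\<bar>^3)"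
      using abs_add_cube_le_4[of "truncX k \<omega>" "- tmean k"] by simp
  qed
  also have "\<dots> = 4 * (tabs3 k + \<bar>tmean k\<bar>^3)"
    using trunc_abs_pow_integrable[of k 3] by (simp add: tabs3_def prob_space)
  finally show ?thesis .
qed

lemma entries_centred: "centred_family (entry k) (row_indices k)"
  unfolding centred_family_def using entries_indep entry_bounded entry_mean by blast

lemma row_sum_moment2: "expectation (\<lambda>\<omega>. (row_sum k \<omega>)\<^sup>2) = real k * tvar k"
proof -
  have "expectation (\<lambda>\<omega>. (row_sum k \<omega>)\<^sup>2) = (\<Sum>p\<in>row_indices k. expectation (\<lambda>\<omega>. (entry k p \<omega>)\<^sup>2))"
    unfolding row_sum_def by (intro second_moment_centred_sum finite_row entries_centred)
  also have "\<dots> = (\<Sum>p\<in>row_indices k. tvar k)" by (intro sum.cong) (auto simp: entry_second_moment)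
  finally show ?thesis by (simp add: card_row)
qed

lemma row_sum_mean: "expectation (row_sum k) = 0"
  unfolding row_sum_def using entries_centred by (rule centred_family_sum)

lemma row_sum_moment4:
  "expectation (\<lambda>\<omega>. (row_sum k \<omega>)^4)
     \<le> real k * (8 * (tfourth k + (tmean k)^4)) + 3 * (real k)\<^sup>2 * (\<sigma>\<^sup>2)\<^sup>2"
  using fourth_moment_centred_sum_le[OF finite_row entries_centred zero_le_power2[of \<sigma>] _
      entry_fourth_moment]
  by (simp add: row_sum_def card_row entry_second_moment tvar_le)

lemma row_sum_moment3:
  "expectation (\<lambda>\<omega>. \<bar>row_sum k \<omega>\<bar>^3)
     \<le> 3 * real k * sqrt (real k * \<sigma>\<^sup>2) * \<sigma>\<^sup>2 + 3 * real k * (4 * (tabs3 k + \<bar>tmean k\<bar>^3))"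
  using third_abs_moment_centred_sum_le[OF finite_row entries_centred zero_le_power2[of \<sigma>] _
      entry_third_moment]
  by (simp add: row_sum_def card_row entry_second_moment tvar_le)

lemma tmean_pow_le: "k \<ge> 1 \<Longrightarrow> \<bar>tmean k\<bar>^n \<le> \<sigma>^n / (real k)\<^sup>2" if "n \<ge> 2"
proof -
  assume k: "k \<ge> 1"
  have "\<bar>tmean k\<bar>^n \<le> (\<sigma> / real k)^n" using tmean_bound[OF k] by (intro power_mono) auto
  also have "\<dots> = \<sigma>^n / (real k)^n" by (simp add: power_divide)
  also have "\<dots> \<le> \<sigma>^n / (real k)\<^sup>2"
    using k that sigma_nonneg by (intro divide_left_mono power_increasing mult_pos_pos) auto
  finally show ?thesis .
qed

lemma trunc_row_mean_moment2:
  assumes k: "k \<ge> 1"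
  shows "expectation (\<lambda>\<omega>. (trunc_row_mean k \<omega>)\<^sup>2) = tvar k / real k + (tmean k)\<^sup>2"
proof -
  have "expectation (\<lambda>\<omega>. (trunc_row_mean k \<omega>)\<^sup>2)
      = expectation (\<lambda>\<omega>. (row_sum k \<omega>)\<^sup>2 / (real k)\<^sup>2 + (2 * tmean k / real k) * row_sum k \<omega>
                         + (tmean k)\<^sup>2)"
    using k by (intro Bochner_Integration.integral_cong)
                (auto simp: trunc_row_mean_eq power2_eq_square field_simps)
  also have "\<dots> = expectation (\<lambda>\<omega>. (row_sum k \<omega>)\<^sup>2) / (real k)\<^sup>2
                  + (2 * tmean k / real k) * expectation (row_sum k) + (tmean k)\<^sup>2"
    by (simp add: prob_space integrable_bounded_on bounded_on_power row_sum_bounded)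
  also have "\<dots> = real k * tvar k / (real k)\<^sup>2 + (tmean k)\<^sup>2"
    by (simp add: row_sum_moment2 row_sum_mean)
  also have "\<dots> = tvar k / real k + (tmean k)\<^sup>2"
    using k by (simp add: power2_eq_square)
  finally show ?thesis .
qed

lemma trunc_row_mean_moment2_approx:
  assumes k: "k \<ge> 1"
  shows "\<bar>expectation (\<lambda>\<omega>. (trunc_row_mean k \<omega>)\<^sup>2) - tsecond k / real k\<bar> \<le> \<sigma>\<^sup>2 / (real k)\<^sup>2"
proof -
  have "expectation (\<lambda>\<omega>. (trunc_row_mean k \<omega>)\<^sup>2) - tsecond k / real k
      = (tmean k)\<^sup>2 * (1 - 1 / real k)"
    using k by (simp add: trunc_row_mean_moment2 tvar_eq field_simps)
  also have "\<bar>\<dots>\<bar> \<le> (tmean k)\<^sup>2"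
    using k by (auto simp: abs_mult intro!: mult_left_le)
  also have "\<dots> \<le> \<sigma>\<^sup>2 / (real k)\<^sup>2" using tmean_pow_le[of 2 k] k by simp
  finally show ?thesis .
qed

text \<open>Summable bounds for E St_k^4 and E|St_k|^3, obtained from the Rosenthal-type inequalities.\<close>
definition bound4 :: "nat \<Rightarrow> real" where
  "bound4 k = 64 * (tfourth k / (real k)^3) + 96 * \<sigma>^4 * (1 / (real k)\<^sup>2)"
definition bound3 :: "nat \<Rightarrow> real" where
  "bound3 k = 12 * \<sigma>^3 * (sqrt (real k) / (real k)\<^sup>2) + 48 * (tabs3 k / (real k)\<^sup>2)
              + 52 * \<sigma>^3 * (1 / (real k)\<^sup>2)"

lemma summable_bound4: "summable bound4"
  unfolding bound4_def
  by (intro summable_add summable_mult summable_tfourth summable_inverse_square)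

lemma summable_bound3: "summable bound3"
  unfolding bound3_def
  by (intro summable_add summable_mult summable_tabs3 summable_inverse_square
        summable_sqrt_div_square)

lemma bound4_nonneg: "bound4 k \<ge> 0"
  unfolding bound4_def using tfourth_nonneg[of k] by (auto intro!: add_nonneg_nonneg)

lemma bound3_nonneg: "bound3 k \<ge> 0"
  unfolding bound3_def using tabs3_nonneg[of k] sigma_nonneg by (auto intro!: add_nonneg_nonneg)

text \<open>St_k = T_k/k + tmean k with E T_k^4 = O(k tfourth k + k^2 sigma^4), and tmean k = O(sigma/k).\<close>
lemma trunc_row_mean_moment4:
  assumes k: "k \<ge> 1"
  shows "expectation (\<lambda>\<omega>. (trunc_row_mean k \<omega>)^4) \<le> bound4 k"
proof -
  have kp: "real k > 0" using k by simp
  have "expectation (\<lambda>\<omega>. (trunc_row_mean k \<omega>)^4)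
      \<le> expectation (\<lambda>\<omega>. 8 * ((row_sum k \<omega>)^4 / (real k)^4 + (tmean k)^4))"
  proof (rule integral_mono)
    show "integrable M (\<lambda>\<omega>. (trunc_row_mean k \<omega>)^4)"
      by (intro integrable_bounded_on bounded_on_power trunc_row_mean_bounded) auto
    show "integrable M (\<lambda>\<omega>. 8 * ((row_sum k \<omega>)^4 / (real k)^4 + (tmean k)^4))"
      by (intro integrable_bounded_on bounded_on_mult bounded_on_add bounded_on_divide
            bounded_on_power row_sum_bounded bounded_on_const) auto
    fix \<omega> show "(trunc_row_mean k \<omega>)^4 \<le> 8 * ((row_sum k \<omega>)^4 / (real k)^4 + (tmean k)^4)"
      using add_pow4_le_8[of "row_sum k \<omega> / real k" "tmean k"] k
      by (simp add: trunc_row_mean_eq power_divide)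
  qed
  also have "\<dots> = 8 * (expectation (\<lambda>\<omega>. (row_sum k \<omega>)^4) / (real k)^4 + (tmean k)^4)"
    by (simp add: prob_space integrable_bounded_on bounded_on_power row_sum_bounded)
  also have "\<dots> \<le> 8 * ((real k * (8 * (tfourth k + (tmean k)^4)) + 3 * (real k)\<^sup>2 * (\<sigma>\<^sup>2)\<^sup>2)
                       / (real k)^4 + (tmean k)^4)"
    using row_sum_moment4[of k] kp by (intro mult_left_mono add_mono divide_right_mono) auto
  also have "\<dots> = 64 * (tfourth k / (real k)^3) + 64 * ((tmean k)^4 / (real k)^3)
                  + 24 * \<sigma>^4 / (real k)\<^sup>2 + 8 * (tmean k)^4"
    using kp by (simp add: field_simps power2_eq_square power3_eq_cube power4_eq_xxxx)
  also have "\<dots> \<le> 64 * (tfourth k / (real k)^3) + 64 * (\<sigma>^4 / (real k)\<^sup>2)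
                  + 24 * \<sigma>^4 / (real k)\<^sup>2 + 8 * (\<sigma>^4 / (real k)\<^sup>2)"
  proof -
    have m4: "(tmean k)^4 \<le> \<sigma>^4 / (real k)\<^sup>2" using tmean_pow_le[of 4 k] k by simp
    have "(tmean k)^4 / (real k)^3 \<le> (tmean k)^4 / 1"
      using k by (intro divide_left_mono) (auto simp: zero_le_even_power)
    then show ?thesis using m4 by simp
  qed
  also have "\<dots> = bound4 k" by (simp add: bound4_def)
  finally show ?thesis .
qed

lemma trunc_row_mean_moment3:
  assumes k: "k \<ge> 1"
  shows "expectation (\<lambda>\<omega>. \<bar>trunc_row_mean k \<omega>\<bar>^3) \<le> bound3 k"
proof -
  have kp: "real k > 0" using k by simp
  have "expectation (\<lambda>\<omega>. \<bar>trunc_row_mean k \<omega>\<bar>^3)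
      \<le> expectation (\<lambda>\<omega>. 4 * (\<bar>row_sum k \<omega>\<bar>^3 / (real k)^3 + \<bar>tmean k\<bar>^3))"
  proof (rule integral_mono)
    show "integrable M (\<lambda>\<omega>. \<bar>trunc_row_mean k \<omega>\<bar>^3)"
      by (intro integrable_bounded_on bounded_on_power bounded_on_abs trunc_row_mean_bounded) auto
    show "integrable M (\<lambda>\<omega>. 4 * (\<bar>row_sum k \<omega>\<bar>^3 / (real k)^3 + \<bar>tmean k\<bar>^3))"
      by (intro integrable_bounded_on bounded_on_mult bounded_on_add bounded_on_divide
            bounded_on_power bounded_on_abs row_sum_bounded bounded_on_const) auto
    fix \<omega> show "\<bar>trunc_row_mean k \<omega>\<bar>^3 \<le> 4 * (\<bar>row_sum k \<omega>\<bar>^3 / (real k)^3 + \<bar>tmean k\<bar>^3)"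
      using abs_add_cube_le_4[of "row_sum k \<omega> / real k" "tmean k"] k kp
      by (simp add: trunc_row_mean_eq power_divide)
  qed
  also have "\<dots> = 4 * (expectation (\<lambda>\<omega>. \<bar>row_sum k \<omega>\<bar>^3) / (real k)^3 + \<bar>tmean k\<bar>^3)"
    by (simp add: prob_space integrable_bounded_on bounded_on_power bounded_on_abs row_sum_bounded)
  also have "\<dots> \<le> 4 * ((3 * real k * sqrt (real k * \<sigma>\<^sup>2) * \<sigma>\<^sup>2
                        + 3 * real k * (4 * (tabs3 k + \<bar>tmean k\<bar>^3))) / (real k)^3 + \<bar>tmean k\<bar>^3)"
    using row_sum_moment3[of k] kp by (intro mult_left_mono add_mono divide_right_mono) auto
  also have "sqrt (real k * \<sigma>\<^sup>2) = sqrt (real k) * \<sigma>"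
    using sigma_nonneg by (simp add: real_sqrt_mult)
  also have "4 * ((3 * real k * (sqrt (real k) * \<sigma>) * \<sigma>\<^sup>2
                   + 3 * real k * (4 * (tabs3 k + \<bar>tmean k\<bar>^3))) / (real k)^3 + \<bar>tmean k\<bar>^3)
      = 12 * \<sigma>^3 * (sqrt (real k) / (real k)\<^sup>2) + 48 * (tabs3 k / (real k)\<^sup>2)
        + 48 * (\<bar>tmean k\<bar>^3 / (real k)\<^sup>2) + 4 * \<bar>tmean k\<bar>^3"
    using kp by (simp add: field_simps power2_eq_square power3_eq_cube)
  also have "\<dots> \<le> 12 * \<sigma>^3 * (sqrt (real k) / (real k)\<^sup>2) + 48 * (tabs3 k / (real k)\<^sup>2)
                  + 48 * (\<sigma>^3 / (real k)\<^sup>2) + 4 * (\<sigma>^3 / (real k)\<^sup>2)"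
  proof -
    have m3: "\<bar>tmean k\<bar>^3 \<le> \<sigma>^3 / (real k)\<^sup>2" using tmean_pow_le[of 3 k] k by simp
    have "\<bar>tmean k\<bar>^3 / (real k)\<^sup>2 \<le> \<bar>tmean k\<bar>^3 / 1" using k by (intro divide_left_mono) auto
    then show ?thesis using m3 by simp
  qed
  also have "\<dots> = bound3 k" by (simp add: bound3_def)
  finally show ?thesis .
qed

subsection \<open>L1 bounds for the truncated sums\<close>

definition centred_square :: "nat \<Rightarrow> 'a \<Rightarrow> real" where
  "centred_square k \<omega> = (trunc_row_mean k \<omega>)\<^sup>2 - expectation (\<lambda>\<omega>. (trunc_row_mean k \<omega>)\<^sup>2)"

lemma disjoint_rows: "disjoint_family_on row_indices L"
  unfolding disjoint_family_on_def row_indices_def by auto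

lemma trunc_row_mean_eq_sum_row:
  "trunc_row_mean k \<omega> = (\<Sum>p\<in>row_indices k. trunc \<sigma> k ((\<lambda>(i, k). Xa i k) p \<omega> - \<mu>)) / real k"
proof -
  have "(\<Sum>p\<in>row_indices k. trunc \<sigma> k ((\<lambda>(i, k). Xa i k) p \<omega> - \<mu>)) = (\<Sum>i=1..k. truncXa i k \<omega>)"
    unfolding row_indices_def by (subst sum.reindex) (auto simp: inj_on_def)
  then show ?thesis by (simp add: trunc_row_mean_def)
qed

text \<open>Each centred square is a measurable function G_k of the entries of row k, and the rows are
  disjoint blocks of an independent family.\<close>
lemma centred_square_indep: "indep_vars (\<lambda>_. borel) centred_square L"
proof -
  define XX where "XX = (\<lambda>(i::nat, k::nat). Xa i k)"
  define G where "G k x = ((\<Sum>p\<in>row_indices k. trunc \<sigma> k (x p - \<mu>)) / real k)\<^sup>2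
                          - expectation (\<lambda>\<omega>. (trunc_row_mean k \<omega>)\<^sup>2)" for k x
  have "indep_vars (\<lambda>k. PiM (row_indices k) (\<lambda>_. borel))
          (\<lambda>k \<omega>. restrict (\<lambda>p. XX p \<omega>) (row_indices k)) L"
    unfolding XX_def by (rule indep_vars_restrict[OF ind row_subset disjoint_rows])
  moreover have "G k \<in> borel_measurable (PiM (row_indices k) (\<lambda>_. borel))" for k
  proof -
    have "(\<lambda>x. x p) \<in> borel_measurable (PiM (row_indices k) (\<lambda>_. borel))"
      if "p \<in> row_indices k" for p
      using that by (rule measurable_component_singleton)
    then have "(\<lambda>x. \<Sum>p\<in>row_indices k. trunc \<sigma> k (x p - \<mu>))
                 \<in> borel_measurable (PiM (row_indices k) (\<lambda>_. borel))"
      by (intro borel_measurable_sum) measurable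
    then show ?thesis unfolding G_def by measurable
  qed
  ultimately have "indep_vars (\<lambda>_. borel) (\<lambda>k \<omega>. G k (restrict (\<lambda>p. XX p \<omega>) (row_indices k))) L"
    by (rule indep_vars_compose2)
  moreover have "G k (restrict (\<lambda>p. XX p \<omega>) (row_indices k)) = centred_square k \<omega>" for k \<omega>
  proof -
    have "(\<Sum>p\<in>row_indices k. trunc \<sigma> k (restrict (\<lambda>p. XX p \<omega>) (row_indices k) p - \<mu>))
        = (\<Sum>p\<in>row_indices k. trunc \<sigma> k (XX p \<omega> - \<mu>))"
      by (intro sum.cong) auto
    then show ?thesis
      unfolding G_def centred_square_def by (simp add: trunc_row_mean_eq_sum_row XX_def)
  qed
  ultimately show ?thesis by simp
qed

lemma centred_square_bounded: "bounded_on (space M) (centred_square k)"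
  unfolding centred_square_def
  by (intro bounded_on_diff bounded_on_power trunc_row_mean_bounded bounded_on_const)

lemma centred_square_mean: "expectation (centred_square k) = 0"
  unfolding centred_square_def
  by (simp add: prob_space integrable_bounded_on bounded_on_power trunc_row_mean_bounded)

lemma centred_square_centred: "centred_family centred_square L"
  unfolding centred_family_def
  using centred_square_indep centred_square_bounded centred_square_mean by blast

text \<open>Var(St_k^2) \<le> E St_k^4.\<close>
lemma centred_square_second_moment:
  assumes k: "k \<ge> 1"
  shows "expectation (\<lambda>\<omega>. (centred_square k \<omega>)\<^sup>2) \<le> bound4 k"
proof -
  define c where "c = expectation (\<lambda>\<omega>. (trunc_row_mean k \<omega>)\<^sup>2)"
  have "expectation (\<lambda>\<omega>. (centred_square k \<omega>)\<^sup>2)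
      = expectation (\<lambda>\<omega>. (trunc_row_mean k \<omega>)^4 - 2 * c * (trunc_row_mean k \<omega>)\<^sup>2 + c\<^sup>2)"
    unfolding centred_square_def c_def[symmetric]
    by (intro Bochner_Integration.integral_cong)
       (auto simp: power2_eq_square power4_eq_xxxx algebra_simps)
  also have "\<dots> = expectation (\<lambda>\<omega>. (trunc_row_mean k \<omega>)^4) - 2 * c * c + c\<^sup>2"
    by (simp add: prob_space c_def integrable_bounded_on bounded_on_power trunc_row_mean_bounded)
  also have "\<dots> \<le> expectation (\<lambda>\<omega>. (trunc_row_mean k \<omega>)^4)" by (simp add: power2_eq_square)
  also have "\<dots> \<le> bound4 k" by (rule trunc_row_mean_moment4[OF k])
  finally show ?thesis .
qed

text \<open>Uniform L1 bound for the first sum: the centred part is bounded in L2 by orthogonality,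
  the deterministic part by trunc_row_mean_moment2_approx.\<close>
lemma L1_bound_squares:
  "expectation (\<lambda>\<omega>. \<bar>\<Sum>k=1..n. ((trunc_row_mean k \<omega>)\<^sup>2 - tsecond k / real k)\<bar>)
     \<le> suminf bound4 / 2 + 1 / 2 + \<sigma>\<^sup>2 * (\<Sum>k. 1 / (real k)\<^sup>2)"
proof -
  define d where "d k = expectation (\<lambda>\<omega>. (trunc_row_mean k \<omega>)\<^sup>2) - tsecond k / real k" for k
  define SU where "SU \<omega> = (\<Sum>k=1..n. centred_square k \<omega>)" for \<omega>
  have SUb: "bounded_on (space M) SU"
    unfolding SU_def by (intro bounded_on_sum centred_square_bounded)
  have SUm[measurable]: "SU \<in> borel_measurable M" unfolding SU_def centred_square_def by measurable
  have eq: "(\<Sum>k=1..n. ((trunc_row_mean k \<omega>)\<^sup>2 - tsecond k / real k)) = SU \<omega> + (\<Sum>k=1..n. d k)"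
    for \<omega> by (simp add: SU_def centred_square_def d_def sum.distrib[symmetric])
  have "expectation (\<lambda>\<omega>. \<bar>\<Sum>k=1..n. ((trunc_row_mean k \<omega>)\<^sup>2 - tsecond k / real k)\<bar>)
      \<le> expectation (\<lambda>\<omega>. (SU \<omega>)\<^sup>2 / 2 + 1/2 + \<bar>\<Sum>k=1..n. d k\<bar>)"
  proof (rule integral_mono)
    show "integrable M (\<lambda>\<omega>. \<bar>\<Sum>k=1..n. ((trunc_row_mean k \<omega>)\<^sup>2 - tsecond k / real k)\<bar>)"
      unfolding eq
      by (intro integrable_bounded_on bounded_on_abs bounded_on_add SUb bounded_on_const) auto
    show "integrable M (\<lambda>\<omega>. (SU \<omega>)\<^sup>2 / 2 + 1/2 + \<bar>\<Sum>k=1..n. d k\<bar>)"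
      by (intro integrable_bounded_on bounded_on_add bounded_on_divide bounded_on_power SUb
            bounded_on_const) auto
    fix \<omega>
    show "\<bar>\<Sum>k=1..n. ((trunc_row_mean k \<omega>)\<^sup>2 - tsecond k / real k)\<bar>
            \<le> (SU \<omega>)\<^sup>2 / 2 + 1/2 + \<bar>\<Sum>k=1..n. d k\<bar>"
      unfolding eq using abs_le_half_square_plus_half[of "SU \<omega>"]
        abs_triangle_ineq[of "SU \<omega>" "\<Sum>k=1..n. d k"]
      by linarith
  qed
  also have "\<dots> = expectation (\<lambda>\<omega>. (SU \<omega>)\<^sup>2) / 2 + 1/2 + \<bar>\<Sum>k=1..n. d k\<bar>"
    by (simp add: prob_space integrable_bounded_on bounded_on_power SUb)
  also have "expectation (\<lambda>\<omega>. (SU \<omega>)\<^sup>2) = (\<Sum>k=1..n. expectation (\<lambda>\<omega>. (centred_square k \<omega>)\<^sup>2))"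
    unfolding SU_def by (intro second_moment_centred_sum centred_square_centred) auto
  also have "\<dots> \<le> (\<Sum>k=1..n. bound4 k)" by (intro sum_mono centred_square_second_moment) auto
  also have "\<dots> \<le> suminf bound4" by (intro sum_le_suminf summable_bound4 bound4_nonneg) auto
  also have "\<bar>\<Sum>k=1..n. d k\<bar> \<le> (\<Sum>k=1..n. \<bar>d k\<bar>)" by (rule sum_abs)
  also have "\<dots> \<le> (\<Sum>k=1..n. \<sigma>\<^sup>2 * (1 / (real k)\<^sup>2))"
    unfolding d_def by (intro sum_mono) (auto intro: trunc_row_mean_moment2_approx)
  also have "\<dots> = \<sigma>\<^sup>2 * (\<Sum>k=1..n. 1 / (real k)\<^sup>2)" by (simp add: sum_distrib_left)
  also have "\<dots> \<le> \<sigma>\<^sup>2 * (\<Sum>k. 1 / (real k)\<^sup>2)"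
    by (intro mult_left_mono sum_le_suminf summable_inverse_square) auto
  finally show ?thesis by simp
qed

lemma L1_bound_cubes:
  "expectation (\<lambda>\<omega>. \<bar>\<Sum>k=1..n. \<bar>trunc_row_mean k \<omega>\<bar>^3\<bar>) \<le> suminf bound3"
proof -
  have "expectation (\<lambda>\<omega>. \<bar>\<Sum>k=1..n. \<bar>trunc_row_mean k \<omega>\<bar>^3\<bar>)
      = expectation (\<lambda>\<omega>. \<Sum>k=1..n. \<bar>trunc_row_mean k \<omega>\<bar>^3)"
    by (rule Bochner_Integration.integral_cong) (auto intro!: abs_of_nonneg sum_nonneg)
  also have "\<dots> = (\<Sum>k=1..n. expectation (\<lambda>\<omega>. \<bar>trunc_row_mean k \<omega>\<bar>^3))"
    by (intro Bochner_Integration.integral_sum integrable_bounded_on bounded_on_power bounded_on_abs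
          trunc_row_mean_bounded) auto
  also have "\<dots> \<le> (\<Sum>k=1..n. bound3 k)" by (intro sum_mono trunc_row_mean_moment3) auto
  also have "\<dots> \<le> suminf bound3" by (intro sum_le_suminf summable_bound3 bound3_nonneg) auto
  finally show ?thesis .
qed

subsection \<open>Removing the truncation\<close>

definition row_mean :: "nat \<Rightarrow> 'a \<Rightarrow> real" where
  "row_mean k \<omega> = ((\<Sum>i=1..k. Xa i k \<omega>) - real k * \<mu>) / real k"

lemma row_mean_measurable[measurable]: "row_mean k \<in> borel_measurable M"
  unfolding row_mean_def by measurable

lemma row_mean_eq_trunc_row_mean:
  "(\<And>i. i \<in> {1..k} \<Longrightarrow> \<bar>Xa i k \<omega> - \<mu>\<bar> \<le> \<sigma> * real k) \<Longrightarrow> row_mean k \<omega> = trunc_row_mean k \<omega>"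
proof -
  assume h: "\<And>i. i \<in> {1..k} \<Longrightarrow> \<bar>Xa i k \<omega> - \<mu>\<bar> \<le> \<sigma> * real k"
  have "(\<Sum>i=1..k. truncXa i k \<omega>) = (\<Sum>i=1..k. Xa i k \<omega> - \<mu>)"
    using h by (intro sum.cong) (auto simp: trunc_def)
  also have "\<dots> = (\<Sum>i=1..k. Xa i k \<omega>) - real k * \<mu>" by (simp add: sum_subtractf)
  finally show ?thesis by (simp add: row_mean_def trunc_row_mean_def)
qed

text \<open>The row mean differs from the truncated row mean only if some entry of the row exceeds
  the truncation level; by summable_exceedance these events have summable probabilities.\<close>
lemma summable_prob_means_differ:
  "summable (\<lambda>k. prob {\<omega> \<in> space M. row_mean k \<omega> \<noteq> trunc_row_mean k \<omega>})"
proof (rule summable_comparison_test'[OF summable_exceedance, where N=0])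
  fix k :: nat
  define B where "B = {x. \<sigma> * real k < \<bar>x - \<mu>\<bar>}"
  have B: "B \<in> sets borel" unfolding B_def by measurable
  define A where "A i = {\<omega> \<in> space M. Xa i k \<omega> \<in> B}" for i
  have A: "A i \<in> sets M" if "i \<in> {1..k}" for i
    using that measurable_sets[OF Xa_measurable B, of i k]
    by (auto simp: A_def vimage_def Int_def conj_commute)
  have "{\<omega> \<in> space M. row_mean k \<omega> \<noteq> trunc_row_mean k \<omega>} \<subseteq> (\<Union>i\<in>{1..k}. A i)"
  proof safe
    fix \<omega> assume "\<omega> \<in> space M" "row_mean k \<omega> \<noteq> trunc_row_mean k \<omega>"
    then obtain i where "i \<in> {1..k}" "\<not> \<bar>Xa i k \<omega> - \<mu>\<bar> \<le> \<sigma> * real k"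
      using row_mean_eq_trunc_row_mean by blast
    then show "\<omega> \<in> (\<Union>i\<in>{1..k}. A i)" using \<open>\<omega> \<in> space M\<close> by (auto simp: A_def B_def not_le)
  qed
  then have "prob {\<omega> \<in> space M. row_mean k \<omega> \<noteq> trunc_row_mean k \<omega>} \<le> prob (\<Union>i\<in>{1..k}. A i)"
    using A by (intro finite_measure_mono) auto
  also have "\<dots> \<le> (\<Sum>i\<in>{1..k}. prob (A i))"
    using A by (intro measure_UNION_le) auto
  also have "\<dots> = (\<Sum>i\<in>{1..k}. prob {\<omega> \<in> space M. X \<omega> \<in> B})"
    unfolding A_def using B by (intro sum.cong refl prob_Xa_eq) auto
  also have "\<dots> = real k * prob {\<omega> \<in> space M. \<sigma> * real k < \<bar>X \<omega> - \<mu>\<bar>}"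
    by (simp add: B_def)
  finally show "norm (prob {\<omega> \<in> space M. row_mean k \<omega> \<noteq> trunc_row_mean k \<omega>})
      \<le> real k * prob {\<omega> \<in> space M. \<sigma> * real k < \<bar>X \<omega> - \<mu>\<bar>}" by simp
qed

text \<open>The two statements of the theorem for the row means: by the previous lemma they reduce
  to the truncated row means, whose partial sums are bounded in L1.\<close>
lemma tight_squares: "bounded_in_prob M (\<lambda>n \<omega>. \<Sum>k=1..n. (row_mean k \<omega>)\<^sup>2 - tsecond k / real k)"
proof (rule bounded_in_prob_sum_perturb[OF prob_space_axioms _ _ _ summable_prob_means_differ])
  show "bounded_in_prob M (\<lambda>n \<omega>. \<Sum>k=1..n. (trunc_row_mean k \<omega>)\<^sup>2 - tsecond k / real k)"
    using L1_bound_squares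
    by (intro bounded_in_prob_L1[OF prob_space_axioms] integrable_bounded_on bounded_on_sum
          bounded_on_diff bounded_on_power trunc_row_mean_bounded bounded_on_const) auto
qed auto

lemma tight_cubes: "bounded_in_prob M (\<lambda>n \<omega>. \<Sum>k=1..n. \<bar>row_mean k \<omega>\<bar>^3)"
proof (rule bounded_in_prob_sum_perturb[OF prob_space_axioms _ _ _ summable_prob_means_differ])
  show "bounded_in_prob M (\<lambda>n \<omega>. \<Sum>k=1..n. \<bar>trunc_row_mean k \<omega>\<bar>^3)"
    using L1_bound_cubes
    by (intro bounded_in_prob_L1[OF prob_space_axioms] integrable_bounded_on bounded_on_sum
          bounded_on_power bounded_on_abs trunc_row_mean_bounded) auto
qed auto

lemma tsecond_eq:
  "integral\<^sup>L M (\<lambda>\<omega>'. (if \<bar>X \<omega>' - \<mu>\<bar> \<le> \<sigma> * real k then (X \<omega>' - \<mu>)\<^sup>2 else 0)) = tsecond k"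
  unfolding tsecond_def trunc_def by (intro Bochner_Integration.integral_cong) auto

end

theorem mainTheorem7:
  fixes M :: "'a measure" and X :: "'a \<Rightarrow> real" and Xa :: "nat \<Rightarrow> nat \<Rightarrow> 'a \<Rightarrow> real"
    and \<mu> \<sigma> :: real
  assumes "prob_space M"
    and "X \<in> borel_measurable M"
    and "integrable M (\<lambda>\<omega>. (X \<omega>)\<^sup>2)"
    and "\<mu> = integral\<^sup>L M X"
    and "\<sigma> = sqrt (prob_space.variance M X)"
    and "prob_space.indep_vars M (\<lambda>_. borel) (\<lambda>(i, k). Xa i k) {(i, k). 1 \<le> i \<and> i \<le> k}"
    and "\<And>i k. 1 \<le> i \<Longrightarrow> i \<le> k \<Longrightarrow> distr M borel (Xa i k) = distr M borel X"
  shows "bounded_in_prob M (\<lambda>n \<omega>. \<Sum>k=1..n.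
            (((\<Sum>i=1..k. Xa i k \<omega>) - real k * \<mu>) / real k)\<^sup>2
            - integral\<^sup>L M (\<lambda>\<omega>'. (if \<bar>X \<omega>' - \<mu>\<bar> \<le> \<sigma> * real k then (X \<omega>' - \<mu>)\<^sup>2 else 0)) / real k) \<and>
         bounded_in_prob M (\<lambda>n \<omega>. \<Sum>k=1..n.
            \<bar>((\<Sum>i=1..k. Xa i k \<omega>) - real k * \<mu>) / real k\<bar> ^ 3)"
proof -
  interpret triangular_array M X Xa \<mu> \<sigma>
    unfolding triangular_array_def triangular_array_axioms_def using assms by auto
  show ?thesis
    using tight_squares tight_cubes by (simp add: row_mean_def tsecond_eq)
qed

end
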